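(* Let $\mathcal{X}$ and $\Theta$ (with metric $d_\Theta$) be compact metric spaces, let $\mu:\mathcal{X}\times\Theta\to\mathbb{R}$ be continuous, and let $f_\theta:\mathcal{X}\to\mathbb{R}^p$, $\theta\in\Theta$, be functions such that for each $\theta$ the image $f_\theta(\mathcal{X})$ spans $\mathbb{R}^p$ and $(x,\theta)\mapsto f_\theta(x)$ is continuous on $\mathcal{X}\times\Theta$. Assume saturated identifiability: whenever $z_1,\ldots,z_p\in\mathcal{X}$ are pairwise distinct and $\theta,\theta'\in\Theta$ satisfy $\mu(z_j,\theta)=\mu(z_j,\theta')$ for $1\le j\le p$, then $\theta=\theta'$. Consider random variables $X_i$ ($\mathcal{X}$-valued) and $Y_i$ (real), $i\in\mathbb{N}$, on a probability space $(\Omega,\mathcal{F},\mathbb{P}_{\bar\theta})$, with $\bar\theta\in\Theta$ the true parameter, generated by the adaptive Wynn algorithm: $X_1,\ldots,X_{n_{\rm st}}$ are fixed points $x_1,\ldots,x_{n_{\rm st}}$ such that $M(\xi_{n_{\rm st}},\theta)$ is positive definite for all $\theta\in\Theta$; for $n\ge n_{\rm st}$, $\hat\theta_n=\hat\theta_n(X_1,Y_1,\ldots,X_n,Y_n)\in\Theta$ is an arbitrary (adaptive) estimator, and $$X_{n+1}\in\arg\max_{x\in\mathcal{X}} f_{\hat\theta_n}^{\mathsf T}(x)\,M^{-1}(\xi_n,\hat\theta_n)\,f_{\hat\theta_n}(x),\qquad \xi_n=\tfrac1n\sum_{i=1}^n\delta_{X_i}.$$ Assume further: (A1) there is a nondecreasing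 sequence of sub-$\sigma$-fields $\mathcal{F}_0\subseteq\mathcal{F}_1\subseteq\cdots\subseteq\mathcal{F}$ such that $X_i$ is $\mathcal{F}_{i-1}$-measurable and $Y_i$ is $\mathcal{F}_i$-measurable for each $i\in\mathbb{N}$; (A2) $Y_i=\mu(X_i,\bar\theta)+e_i$ with real square-integrable errors $e_i$ satisfying $\mathrm{E}(e_i\mid\mathcal{F}_{i-1})=0$ a.s. for all $i$ and $\sup_{i\in\mathbb{N}}\mathrm{E}(e_i^2\mid\mathcal{F}_{i-1})<\infty$ a.s. Then, irrespective of the adaptive estimators $\hat\theta_n$ employed in the algorithm, the adaptive least squares estimators $$\hat\theta_n^{(\mathrm{LS})}\in\arg\min_{\theta\in\Theta}\sum_{i=1}^n\bigl(Y_i-\mu(X_i,\theta)\bigr)^2,\qquad n\ge n_{\rm st},$$ are strongly consistent: $\hat\theta_n^{(\mathrm{LS})}\to\bar\theta$ almost surely as $n\to\infty$.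
   Context: A design is a finitely supported probability measure on $\mathcal{X}$; $\delta_x$ denotes the point mass at $x$. The information matrix of a design $\xi$ at $\theta$ is $M(\xi,\theta)=\sum_{x\in\mathrm{supp}(\xi)}\xi(x)f_\theta(x)f_\theta^{\mathsf T}(x)$. The estimators $\hat\theta_n$ and $\hat\theta_n^{(\mathrm{LS})}$ are $\Theta$-valued functions of the data available at stage $n$ (measurable random variables). *)

theory Defs
  imports "HOL-Analysis.Analysis" "HOL-Probability.Probability"
begin

text \<open>A design is a finitely supported probability measure on the design space,
  represented by its weight function.\<close>

definition outer_prod :: "real ^ 'p \<Rightarrow> real ^ 'p ^ 'p" where
  "outer_prod v = (\<chi> i j. v $ i * v $ j)"

definition info_matrix ::
  "('t \<Rightarrow> 'x \<Rightarrow> real ^ 'p) \<Rightarrow> ('x \<Rightarrow> real) \<Rightarrow> 't \<Rightarrow> real ^ 'p ^ 'p" where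
  "info_matrix f \<xi> \<theta> = (\<Sum>x\<in>{x. \<xi> x \<noteq> 0}. \<xi> x *\<^sub>R outer_prod (f \<theta> x))"

definition emp_design :: "(nat \<Rightarrow> 'x) \<Rightarrow> nat \<Rightarrow> 'x \<Rightarrow> real" where
  "emp_design xs n = (\<lambda>x. real (card {i\<in>{1..n}. xs i = x}) / real n)"

definition pos_def_mat :: "real ^ 'p ^ 'p \<Rightarrow> bool" where
  "pos_def_mat A \<longleftrightarrow> (\<forall>v. v \<noteq> 0 \<longrightarrow> v \<bullet> (A *v v) > 0)"

end

theory Submission
  imports Defs "HOL-Library.Discrete_Functions"
begin

(* Along every sample path the Wynn design keeps a positive fraction of its points away from any
   set Z of fewer than p points: whenever the new point x_(n+1) is crowded by earlier design
   points, the sensitivity criterion forces the design to be spread out in every direction, in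
   particular orthogonally to f at the points of Z, and this bounds the number of visits near Z.
   By saturated identifiability mu(., theta) - mu(., theta_bar) vanishes on fewer than p points
   when theta <> theta_bar, so by compactness (1/n) sum_i (mu(x_i, theta) - mu(x_i, theta_bar))^2
   is eventually bounded below, uniformly on {d(theta, theta_bar) >= eps}. The least squares
   inequality bounds the same quantity by twice the noise average
   (1/n) sum_i (mu(x_i, theta) - mu(x_i, theta_bar)) e_i, which tends to zero uniformly in theta
   almost surely: on a countable net by the strong law for martingale differences with bounded
   conditional variances, and in between because (1/n) sum_i |e_i| stays bounded. *)

section \<open>A strong law for orthogonal sequences\<close>

lemma averages_tendsto_zero_via_squares:
  fixes s t :: "nat \<Rightarrow> real"
  assumes gap: "\<And>m n. m\<^sup>2 \<le> n \<Longrightarrow> n < (Suc m)\<^sup>2 \<Longrightarrow> \<bar>s n - s (m\<^sup>2)\<bar> \<le> t m"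
    and small: "\<And>r. r > 0 \<Longrightarrow>
      eventually (\<lambda>m. \<bar>s (m\<^sup>2)\<bar> < r * (real m)\<^sup>2 \<and> t m < r * (real m)\<^sup>2) sequentially"
  shows "(\<lambda>n. s n / real n) \<longlonglongrightarrow> 0"
proof (rule LIMSEQ_I)
  fix r :: real assume "0 < r"
  then obtain M0 where M0: "\<And>m. m \<ge> M0 \<Longrightarrow> \<bar>s (m\<^sup>2)\<bar> < r/2 * (real m)\<^sup>2 \<and> t m < r/2 * (real m)\<^sup>2"
    using small[of "r/2"] unfolding eventually_sequentially by auto
  have "\<bar>s n\<bar> / real n < r" if n: "n \<ge> (Suc M0)\<^sup>2" for n
  proof -
    define m where "m = floor_sqrt n"
    have m: "m\<^sup>2 \<le> n" "n < (Suc m)\<^sup>2" "M0 < m"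
      using le_floor_sqrtI[OF n] Suc_floor_sqrt_power2_gt[of n] by (auto simp: m_def)
    have "\<bar>s n\<bar> \<le> \<bar>s (m\<^sup>2)\<bar> + t m" using gap[OF m(1,2)] by linarith
    also have "\<dots> < r * (real m)\<^sup>2" using M0[of m] m(3) by simp
    also have "\<dots> \<le> r * real n"
      using m(1) \<open>0 < r\<close> by (intro mult_left_mono) (simp_all flip: of_nat_power)
    moreover have "0 < real n" using m(1,3) by (simp add: less_le_trans[of 0 "m\<^sup>2"])
    ultimately show ?thesis by (simp add: field_simps)
  qed
  then show "\<exists>N. \<forall>n\<ge>N. norm (s n / real n - 0) < r"
    by (auto simp: abs_divide)
qed

lemma integrable_mult_of_square_integrable:
  fixes a b :: "'a \<Rightarrow> real"
  assumes "a \<in> borel_measurable M" "b \<in> borel_measurable M"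
    and "integrable M (\<lambda>\<omega>. (a \<omega>)\<^sup>2)" "integrable M (\<lambda>\<omega>. (b \<omega>)\<^sup>2)"
  shows "integrable M (\<lambda>\<omega>. a \<omega> * b \<omega>)"
proof (rule Bochner_Integration.integrable_bound)
  show "integrable M (\<lambda>\<omega>. (a \<omega>)\<^sup>2 + (b \<omega>)\<^sup>2)" using assms(3,4) by simp
  have "\<bar>a \<omega> * b \<omega>\<bar> \<le> (a \<omega>)\<^sup>2 + (b \<omega>)\<^sup>2" for \<omega>
    using sum_squares_bound[of "\<bar>a \<omega>\<bar>" "\<bar>b \<omega>\<bar>"] abs_ge_zero[of "a \<omega> * b \<omega>"]
    unfolding abs_mult power2_abs by linarith
  then show "AE \<omega> in M. norm (a \<omega> * b \<omega>) \<le> norm ((a \<omega>)\<^sup>2 + (b \<omega>)\<^sup>2)" by simp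
qed (use assms(1,2) in measurable)

lemma square_sum_abs_le:
  fixes a :: "'i \<Rightarrow> real"
  shows "(\<Sum>i\<in>I. \<bar>a i\<bar>)\<^sup>2 \<le> real (card I) * (\<Sum>i\<in>I. (a i)\<^sup>2)"
  using Cauchy_Schwarz_ineq_sum[of "\<lambda>_. 1" "\<lambda>i. \<bar>a i\<bar>" I] by simp

context prob_space
begin

lemma integral_square_sum_orthogonal:
  fixes a :: "nat \<Rightarrow> 'a \<Rightarrow> real"
  assumes meas: "\<And>i. i \<in> I \<Longrightarrow> a i \<in> borel_measurable M"
    and sq: "\<And>i. i \<in> I \<Longrightarrow> integrable M (\<lambda>\<omega>. (a i \<omega>)\<^sup>2)"
    and orth: "\<And>i j. i \<in> I \<Longrightarrow> j \<in> I \<Longrightarrow> i < j \<Longrightarrow> (\<integral>\<omega>. a i \<omega> * a j \<omega> \<partial>M) = 0"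
    and "finite I"
  shows "(\<integral>\<omega>. (\<Sum>i\<in>I. a i \<omega>)\<^sup>2 \<partial>M) = (\<Sum>i\<in>I. \<integral>\<omega>. (a i \<omega>)\<^sup>2 \<partial>M)"
proof -
  have int: "integrable M (\<lambda>\<omega>. a i \<omega> * a j \<omega>)" if "i \<in> I" "j \<in> I" for i j
    using that by (intro integrable_mult_of_square_integrable meas sq)
  have cross: "(\<integral>\<omega>. a i \<omega> * a j \<omega> \<partial>M) = 0" if "i \<in> I" "j \<in> I" "i \<noteq> j" for i j
    using orth[of i j] orth[of j i] that by (cases "i < j") (auto simp: mult.commute)
  have "(\<integral>\<omega>. (\<Sum>i\<in>I. a i \<omega>)\<^sup>2 \<partial>M) = (\<Sum>i\<in>I. \<Sum>j\<in>I. \<integral>\<omega>. a i \<omega> * a j \<omega> \<partial>M)"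
    using int by (simp add: power2_eq_square sum_product)
  also have "\<dots> = (\<Sum>i\<in>I. \<integral>\<omega>. a i \<omega> * a i \<omega> \<partial>M)"
    using \<open>finite I\<close> cross by (intro sum.cong refl) (simp add: sum.remove[of I] sum.neutral)
  finally show ?thesis by (simp add: power2_eq_square)
qed

lemma integrable_square_sum:
  fixes b :: "nat \<Rightarrow> 'a \<Rightarrow> real"
  assumes "\<And>i. i \<in> I \<Longrightarrow> b i \<in> borel_measurable M"
    and "\<And>i. i \<in> I \<Longrightarrow> integrable M (\<lambda>\<omega>. (b i \<omega>)\<^sup>2)"
  shows "integrable M (\<lambda>\<omega>. (\<Sum>i\<in>I. b i \<omega>)\<^sup>2)"
  unfolding power2_eq_square[of "sum _ _"] sum_product
  by (intro Bochner_Integration.integrable_sum integrable_mult_of_square_integrable assms)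

lemma AE_eventually_small_of_second_moment:
  fixes Z :: "nat \<Rightarrow> 'a \<Rightarrow> real"
  assumes [measurable]: "\<And>m. Z m \<in> borel_measurable M"
    and sq: "\<And>m. integrable M (\<lambda>\<omega>. (Z m \<omega>)\<^sup>2)"
    and bound: "\<And>m. (\<integral>\<omega>. (Z m \<omega>)\<^sup>2 \<partial>M) \<le> C * (real m)\<^sup>2"
  shows "AE \<omega> in M. \<forall>r>0. eventually (\<lambda>m. \<bar>Z m \<omega>\<bar> < r * (real m)\<^sup>2) sequentially"
proof -
  define A where "A j m = {\<omega>\<in>space M. (real m)\<^sup>2 / real (Suc j) \<le> \<bar>Z m \<omega>\<bar>}" for j m
  have [measurable]: "A j m \<in> sets M" for j m unfolding A_def by measurable
  have "measure M (A j m) \<le> C * (real (Suc j))\<^sup>2 * inverse ((real m)\<^sup>2)" if "m \<ge> 1" for j m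
  proof -
    have "measure M (A j m) \<le> (\<integral>\<omega>. (Z m \<omega>)\<^sup>2 \<partial>M) / ((real m)\<^sup>2 / real (Suc j))\<^sup>2"
      unfolding A_def using that by (intro second_moment_method sq) auto
    also have "\<dots> \<le> C * (real m)\<^sup>2 / ((real m)\<^sup>2 / real (Suc j))\<^sup>2"
      by (intro divide_right_mono bound) simp
    also have "\<dots> = C * (real (Suc j))\<^sup>2 * inverse ((real m)\<^sup>2)"
      using that by (simp add: field_simps power2_eq_square)
    finally show ?thesis .
  qed
  then have "summable (\<lambda>m. measure M (A j m))" for j
    by (intro summable_comparison_test'[where N=1, OF summable_mult[OF inverse_power_summable]]) auto
  then have "AE \<omega> in M. eventually (\<lambda>m. \<omega> \<in> space M - A j m) sequentially" for j
    by (intro borel_cantelli_AE1) (auto simp: emeasure_eq_measure)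
  then have "AE \<omega> in M. \<forall>j. eventually (\<lambda>m. \<omega> \<in> space M - A j m) sequentially"
    by (simp add: AE_all_countable)
  then show ?thesis
  proof (rule AE_mp, intro AE_I2 impI allI)
    fix \<omega> and r :: real assume \<omega>: "\<omega> \<in> space M"
      and ev: "\<forall>j. eventually (\<lambda>m. \<omega> \<in> space M - A j m) sequentially"
    assume "0 < r"
    then obtain j where j: "inverse (real (Suc j)) < r" using reals_Archimedean by blast
    show "eventually (\<lambda>m. \<bar>Z m \<omega>\<bar> < r * (real m)\<^sup>2) sequentially"
      using ev[rule_format, of j]
    proof eventually_elim
      case (elim m)
      then have "\<bar>Z m \<omega>\<bar> < (real m)\<^sup>2 / real (Suc j)" using \<omega> by (auto simp: A_def)
      also have "\<dots> \<le> r * (real m)\<^sup>2"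
        using mult_right_mono[OF less_imp_le[OF j], of "(real m)\<^sup>2"]
        by (simp add: divide_inverse mult.commute)
      finally show ?case .
    qed
  qed
qed

lemma integral_square_sum_abs_le:
  fixes a :: "nat \<Rightarrow> 'a \<Rightarrow> real"
  assumes meas: "\<And>i. i \<in> I \<Longrightarrow> a i \<in> borel_measurable M"
    and sq: "\<And>i. i \<in> I \<Longrightarrow> integrable M (\<lambda>\<omega>. (a i \<omega>)\<^sup>2)"
    and bound: "\<And>i. i \<in> I \<Longrightarrow> (\<integral>\<omega>. (a i \<omega>)\<^sup>2 \<partial>M) \<le> K"
  shows "(\<integral>\<omega>. (\<Sum>i\<in>I. \<bar>a i \<omega>\<bar>)\<^sup>2 \<partial>M) \<le> (real (card I))\<^sup>2 * K"
proof -
  have "(\<integral>\<omega>. (\<Sum>i\<in>I. \<bar>a i \<omega>\<bar>)\<^sup>2 \<partial>M) \<le> (\<integral>\<omega>. real (card I) * (\<Sum>i\<in>I. (a i \<omega>)\<^sup>2) \<partial>M)"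
    using meas sq square_sum_abs_le[of _ I]
    by (intro integral_mono integrable_square_sum borel_measurable_abs) auto
  also have "\<dots> = real (card I) * (\<Sum>i\<in>I. \<integral>\<omega>. (a i \<omega>)\<^sup>2 \<partial>M)"
    using sq by (simp add: integral_sum)
  also have "\<dots> \<le> real (card I) * (\<Sum>i\<in>I. K)"
    by (intro mult_left_mono sum_mono bound) auto
  finally show ?thesis by (simp add: power2_eq_square mult_ac)
qed

text \<open>Chebyshev's inequality and the Borel--Cantelli lemma along the squares m^2, combined with the
  second moments of the block sums between consecutive squares.\<close>
theorem orthogonal_slln:
  fixes a :: "nat \<Rightarrow> 'a \<Rightarrow> real"
  assumes meas: "\<And>i. 1 \<le> i \<Longrightarrow> a i \<in> borel_measurable M"
    and sq: "\<And>i. 1 \<le> i \<Longrightarrow> integrable M (\<lambda>\<omega>. (a i \<omega>)\<^sup>2)"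
    and orth: "\<And>i j. 1 \<le> i \<Longrightarrow> i < j \<Longrightarrow> (\<integral>\<omega>. a i \<omega> * a j \<omega> \<partial>M) = 0"
    and bound: "\<And>i. 1 \<le> i \<Longrightarrow> (\<integral>\<omega>. (a i \<omega>)\<^sup>2 \<partial>M) \<le> K"
  shows "AE \<omega> in M. (\<lambda>n. (\<Sum>i=1..n. a i \<omega>) / real n) \<longlonglongrightarrow> 0"
proof -
  define S where "S n \<omega> = (\<Sum>i=1..n. a i \<omega>)" for n \<omega>
  define T where "T m \<omega> = (\<Sum>i\<in>{m\<^sup>2<..<(Suc m)\<^sup>2}. \<bar>a i \<omega>\<bar>)" for m \<omega>
  have pos: "1 \<le> i" if "i \<in> {m\<^sup>2<..<(Suc m)\<^sup>2}" for i m using that by simp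
  have "(\<integral>\<omega>. (S (m\<^sup>2) \<omega>)\<^sup>2 \<partial>M) = (\<Sum>i=1..m\<^sup>2. \<integral>\<omega>. (a i \<omega>)\<^sup>2 \<partial>M)" for m
    unfolding S_def by (intro integral_square_sum_orthogonal meas sq orth) auto
  also have "\<dots> m \<le> K * (real m)\<^sup>2" for m
    using sum_mono[of "{1..m\<^sup>2}" "\<lambda>i. \<integral>\<omega>. (a i \<omega>)\<^sup>2 \<partial>M" "\<lambda>_. K"] bound by (simp add: mult.commute)
  finally have "AE \<omega> in M. \<forall>r>0. eventually (\<lambda>m. \<bar>S (m\<^sup>2) \<omega>\<bar> < r * (real m)\<^sup>2) sequentially"
    unfolding S_def using meas sq by (intro AE_eventually_small_of_second_moment integrable_square_sum) auto
  moreover have "(\<integral>\<omega>. (T m \<omega>)\<^sup>2 \<partial>M) \<le> 4 * K * (real m)\<^sup>2" for m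
    using integral_square_sum_abs_le[of "{m\<^sup>2<..<(Suc m)\<^sup>2}" a K] meas sq bound pos
    by (simp add: T_def power2_eq_square algebra_simps)
  then have "AE \<omega> in M. \<forall>r>0. eventually (\<lambda>m. \<bar>T m \<omega>\<bar> < r * (real m)\<^sup>2) sequentially"
    unfolding T_def using meas sq pos
    by (intro AE_eventually_small_of_second_moment integrable_square_sum borel_measurable_abs) auto
  ultimately show ?thesis
  proof eventually_elim
    case (elim \<omega>)
    have "(\<lambda>n. S n \<omega> / real n) \<longlonglongrightarrow> 0"
    proof (rule averages_tendsto_zero_via_squares)
      fix m n :: nat assume mn: "m\<^sup>2 \<le> n" "n < (Suc m)\<^sup>2"
      have split: "{1..n} = {1..m\<^sup>2} \<union> {m\<^sup>2<..n}" using mn(1) by auto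
      have "S n \<omega> - S (m\<^sup>2) \<omega> = (\<Sum>i\<in>{m\<^sup>2<..n}. a i \<omega>)"
        unfolding S_def split by (subst sum.union_disjoint) auto
      also have "\<bar>\<dots>\<bar> \<le> (\<Sum>i\<in>{m\<^sup>2<..n}. \<bar>a i \<omega>\<bar>)" by (rule sum_abs)
      also have "\<dots> \<le> T m \<omega>" unfolding T_def by (rule sum_mono2) (use mn in auto)
      finally show "\<bar>S n \<omega> - S (m\<^sup>2) \<omega>\<bar> \<le> T m \<omega>" .
    next
      fix r :: real assume "0 < r"
      with elim have "eventually (\<lambda>m. \<bar>S (m\<^sup>2) \<omega>\<bar> < r * (real m)\<^sup>2) sequentially"
        "eventually (\<lambda>m. \<bar>T m \<omega>\<bar> < r * (real m)\<^sup>2) sequentially" by auto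
      then show "eventually (\<lambda>m. \<bar>S (m\<^sup>2) \<omega>\<bar> < r * (real m)\<^sup>2 \<and> T m \<omega> < r * (real m)\<^sup>2) sequentially"
        by eventually_elim (use abs_ge_self in fastforce)
    qed
    then show ?case unfolding S_def .
  qed
qed

end

section \<open>Compactness and continuity\<close>

lemma continuous_on_Times_fst:
  assumes "continuous_on (A \<times> B) (\<lambda>(a, b). g a b)" "b \<in> B"
  shows "continuous_on A (\<lambda>a. g a b)"
  by (rule continuous_on_compose2[OF assms(1), of _ "\<lambda>a. (a, b)", simplified])
     (use assms(2) in \<open>auto intro: continuous_on_Pair continuous_on_const continuous_on_id\<close>)

lemma continuous_on_Times_snd:
  assumes "continuous_on (A \<times> B) (\<lambda>(a, b). g a b)" "a \<in> A"
  shows "continuous_on B (\<lambda>b. g a b)"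
  by (rule continuous_on_compose2[OF assms(1), of _ "\<lambda>b. (a, b)", simplified])
     (use assms(2) in \<open>auto intro: continuous_on_Pair continuous_on_const continuous_on_id\<close>)

lemma borel_measurable_continuous_on_comp:
  assumes "continuous_on S h" "g \<in> borel_measurable N" "\<And>\<omega>. \<omega> \<in> space N \<Longrightarrow> g \<omega> \<in> S"
  shows "(\<lambda>\<omega>. h (g \<omega>)) \<in> borel_measurable N"
proof -
  have "g \<in> measurable N (restrict_space borel S)"
    using assms(2,3) by (intro measurable_restrict_space2) auto
  then show ?thesis
    using measurable_comp[OF _ borel_measurable_continuous_on_restrict[OF assms(1)]] by (simp add: comp_def)
qed

lemma compact_Times_uniform_continuity:
  fixes g :: "'a::metric_space \<Rightarrow> 'b::metric_space \<Rightarrow> 'c::metric_space"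
  assumes "continuous_on (A \<times> B) (\<lambda>(a, b). g a b)" "compact A" "compact B" "0 < e"
  obtains d where "0 < d" "\<And>a a' b b'. a \<in> A \<Longrightarrow> a' \<in> A \<Longrightarrow> b \<in> B \<Longrightarrow> b' \<in> B \<Longrightarrow>
    dist a a' < d \<Longrightarrow> dist b b' < d \<Longrightarrow> dist (g a b) (g a' b') < e"
proof -
  have "uniformly_continuous_on (A \<times> B) (\<lambda>(a, b). g a b)"
    using assms by (intro compact_uniformly_continuous compact_Times)
  then obtain d where "0 < d" and d: "\<And>p p'. p \<in> A \<times> B \<Longrightarrow> p' \<in> A \<times> B \<Longrightarrow> dist p' p < d
      \<Longrightarrow> dist ((\<lambda>(a, b). g a b) p') ((\<lambda>(a, b). g a b) p) < e"
    using uniformly_continuous_onE[OF _ \<open>0 < e\<close>] by metis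
  show ?thesis
  proof (rule that)
    show "0 < d / 2" using \<open>0 < d\<close> by simp
    fix a a' b b' assume ab: "a \<in> A" "a' \<in> A" "b \<in> B" "b' \<in> B" "dist a a' < d / 2" "dist b b' < d / 2"
    have "dist (a, b) (a', b') \<le> dist a a' + dist b b'"
      unfolding dist_Pair_Pair by (rule sqrt_sum_squares_le_sum) simp_all
    then show "dist (g a b) (g a' b') < e" using d[of "(a', b')" "(a, b)"] ab by (simp add: dist_commute)
  qed
qed

lemma compact_Times_bounded:
  fixes g :: "'a::metric_space \<Rightarrow> 'b::metric_space \<Rightarrow> 'c::real_normed_vector"
  assumes "continuous_on (A \<times> B) (\<lambda>(a, b). g a b)" "compact A" "compact B"
  obtains C where "\<And>a b. a \<in> A \<Longrightarrow> b \<in> B \<Longrightarrow> norm (g a b) \<le> C"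
proof -
  have "bounded ((\<lambda>(a, b). g a b) ` (A \<times> B))"
    using assms by (intro compact_imp_bounded compact_continuous_image compact_Times)
  then show ?thesis using that by (auto simp: bounded_iff)
qed

lemma compact_square_lower_bound:
  fixes g :: "'a::topological_space \<Rightarrow> real"
  assumes "compact K" "continuous_on K g" "\<And>y. y \<in> K \<Longrightarrow> g y \<noteq> 0"
  obtains \<gamma> where "0 < \<gamma>" "\<And>y. y \<in> K \<Longrightarrow> \<gamma> \<le> (g y)\<^sup>2"
proof (cases "K = {}")
  case False
  have "continuous_on K (\<lambda>y. (g y)\<^sup>2)" using assms(2) by (intro continuous_intros)
  then obtain y0 where "y0 \<in> K" "\<And>y. y \<in> K \<Longrightarrow> (g y0)\<^sup>2 \<le> (g y)\<^sup>2"
    using continuous_attains_inf[OF assms(1) False] by blast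
  with assms(3) show ?thesis by (intro that[of "(g y0)\<^sup>2"]) auto
qed (use that[of 1] in simp)

lemma compact_eventually_uniform_lower_bound:
  fixes Q :: "'n \<Rightarrow> 'a::metric_space \<Rightarrow> real"
  assumes "compact K"
    and local: "\<And>t. t \<in> K \<Longrightarrow> \<exists>c>0. \<exists>r>0. eventually (\<lambda>n. \<forall>\<theta>\<in>K. dist \<theta> t < r \<longrightarrow> c \<le> Q n \<theta>) F"
  shows "\<exists>c>0. eventually (\<lambda>n. \<forall>\<theta>\<in>K. c \<le> Q n \<theta>) F"
proof -
  obtain C where "\<forall>t\<in>K. \<exists>r. 0 < C t \<and> 0 < r \<and> eventually (\<lambda>n. \<forall>\<theta>\<in>K. dist \<theta> t < r \<longrightarrow> C t \<le> Q n \<theta>) F"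
    using bchoice[of K] local by meson
  then obtain R where CR: "\<And>t. t \<in> K \<Longrightarrow> 0 < C t \<and> 0 < R t
      \<and> eventually (\<lambda>n. \<forall>\<theta>\<in>K. dist \<theta> t < R t \<longrightarrow> C t \<le> Q n \<theta>) F"
    using bchoice[of K] by meson
  have cover: "K \<subseteq> (\<Union>t\<in>K. ball t (R t))" using CR by auto
  obtain T where T: "T \<subseteq> K" "finite T" "K \<subseteq> (\<Union>t\<in>T. ball t (R t))"
    by (rule compactE_image[OF \<open>compact K\<close> _ cover]) auto
  show ?thesis
  proof (cases "T = {}")
    case True
    then show ?thesis using T(3) by (intro exI[of _ 1]) auto
  next
    case False
    have "eventually (\<lambda>n. \<forall>t\<in>T. \<forall>\<theta>\<in>K. dist \<theta> t < R t \<longrightarrow> C t \<le> Q n \<theta>) F"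
      using CR T by (intro eventually_ball_finite) auto
    then have "eventually (\<lambda>n. \<forall>\<theta>\<in>K. Min (C ` T) \<le> Q n \<theta>) F"
    proof eventually_elim
      case (elim n)
      show ?case
      proof
        fix \<theta> assume "\<theta> \<in> K"
        then obtain t where "t \<in> T" "dist \<theta> t < R t" using T(3) by (auto simp: dist_commute)
        then show "Min (C ` T) \<le> Q n \<theta>"
          using elim \<open>\<theta> \<in> K\<close> T(2) by (meson Min_le finite_imageI imageI order_trans)
      qed
    qed
    moreover have "0 < Min (C ` T)" using CR T False by (subst Min_gr_iff) auto
    ultimately show ?thesis by blast
  qed
qed

section \<open>Martingale differences\<close>

locale discrete_filtration = prob_space +
  fixes F :: "nat \<Rightarrow> 'a measure"
  assumes subalgebra_F: "subalgebra M (F n)"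
    and sets_F_mono: "sets (F n) \<subseteq> sets (F (Suc n))"
begin

lemma sigma_finite_subalgebra_F: "sigma_finite_subalgebra M (F n)"
  by (intro finite_measure_subalgebra_is_sigma_finite)
     (simp add: finite_measure_subalgebra_def finite_measure_subalgebra_axioms_def
        subalgebra_F finite_measure_axioms)

lemma borel_measurable_F_imp_M: "g \<in> borel_measurable (F n) \<Longrightarrow> g \<in> borel_measurable M"
  by (rule measurable_from_subalg[OF subalgebra_F])

lemma borel_measurable_F_mono:
  assumes "m \<le> n" and "g \<in> borel_measurable (F m)"
  shows "g \<in> borel_measurable (F n)"
proof -
  have "sets (F m) \<subseteq> sets (F n)"
    using lift_Suc_mono_le[of "\<lambda>n. sets (F n)", OF sets_F_mono \<open>m \<le> n\<close>] by simp
  moreover have "space (F m) = space (F n)" using subalgebra_F by (simp add: subalgebra_def)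
  ultimately show ?thesis
    using assms(2) by (intro measurable_from_subalg[of "F n"]) (simp_all add: subalgebra_def)
qed

definition L2_martingale_difference :: "(nat \<Rightarrow> 'a \<Rightarrow> real) \<Rightarrow> bool" where
  "L2_martingale_difference d \<longleftrightarrow> (\<forall>i\<ge>1. d i \<in> borel_measurable (F i)
     \<and> integrable M (\<lambda>\<omega>. (d i \<omega>)\<^sup>2) \<and> (AE \<omega> in M. real_cond_exp M (F (i - 1)) (d i) \<omega> = 0))"

text \<open>The conditional second moment, which is the conditional variance when d is a martingale
  difference sequence.\<close>
definition cond_var :: "(nat \<Rightarrow> 'a \<Rightarrow> real) \<Rightarrow> nat \<Rightarrow> 'a \<Rightarrow> real" where
  "cond_var d i = real_cond_exp M (F (i - 1)) (\<lambda>\<omega>. (d i \<omega>)\<^sup>2)"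

lemma L2_martingale_differenceD:
  assumes "L2_martingale_difference d" and "1 \<le> i"
  shows "d i \<in> borel_measurable (F i)" "d i \<in> borel_measurable M"
    "integrable M (\<lambda>\<omega>. (d i \<omega>)\<^sup>2)" "integrable M (d i)"
    "AE \<omega> in M. real_cond_exp M (F (i - 1)) (d i) \<omega> = 0"
proof -
  show F: "d i \<in> borel_measurable (F i)" and sq: "integrable M (\<lambda>\<omega>. (d i \<omega>)\<^sup>2)"
    and "AE \<omega> in M. real_cond_exp M (F (i - 1)) (d i) \<omega> = 0"
    using assms unfolding L2_martingale_difference_def by auto
  show M: "d i \<in> borel_measurable M" by (rule borel_measurable_F_imp_M[OF F])
  show "integrable M (d i)" by (rule square_integrable_imp_integrable[OF M sq])
qed

lemma L2_martingale_difference_orthogonal: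
  assumes d: "L2_martingale_difference d" and "1 \<le> i" "i < j"
  shows "(\<integral>\<omega>. d i \<omega> * d j \<omega> \<partial>M) = 0"
proof -
  note di = L2_martingale_differenceD[OF d \<open>1 \<le> i\<close>]
  note dj = L2_martingale_differenceD[OF d, of j]
  note [measurable] = di(2)
  have "d i \<in> borel_measurable (F (j - 1))"
    using assms(3) by (intro borel_measurable_F_mono[OF _ di(1)]) simp
  moreover have "integrable M (\<lambda>\<omega>. d i \<omega> * d j \<omega>)"
    using assms by (intro integrable_mult_of_square_integrable di dj) auto
  ultimately have "(\<integral>\<omega>. d i \<omega> * real_cond_exp M (F (j - 1)) (d j) \<omega> \<partial>M) = (\<integral>\<omega>. d i \<omega> * d j \<omega> \<partial>M)"
    using assms dj by (intro sigma_finite_subalgebra.real_cond_exp_intg(2)[OF sigma_finite_subalgebra_F]) auto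
  moreover have "(\<integral>\<omega>. d i \<omega> * real_cond_exp M (F (j - 1)) (d j) \<omega> \<partial>M) = (\<integral>\<omega>. 0 \<partial>M)"
    using assms dj by (intro integral_cong_AE) auto
  ultimately show ?thesis by simp
qed

lemma cond_var_nonneg:
  assumes "d i \<in> borel_measurable M"
  shows "AE \<omega> in M. 0 \<le> cond_var d i \<omega>"
  unfolding cond_var_def using assms
  by (intro sigma_finite_subalgebra.real_cond_exp_pos[OF sigma_finite_subalgebra_F]) auto

lemma integral_square_le_of_cond_var_le:
  assumes "integrable M (\<lambda>\<omega>. (d i \<omega>)\<^sup>2)" and "AE \<omega> in M. cond_var d i \<omega> \<le> K"
  shows "(\<integral>\<omega>. (d i \<omega>)\<^sup>2 \<partial>M) \<le> K"
proof -
  interpret sigma_finite_subalgebra M "F (i - 1)" by (rule sigma_finite_subalgebra_F)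
  have "(\<integral>\<omega>. (d i \<omega>)\<^sup>2 \<partial>M) = (\<integral>\<omega>. cond_var d i \<omega> \<partial>M)"
    unfolding cond_var_def using real_cond_exp_int(2)[OF assms(1)] by simp
  also have "\<dots> \<le> (\<integral>\<omega>. K \<partial>M)"
    using assms unfolding cond_var_def by (intro integral_mono_AE real_cond_exp_int(1)) auto
  finally show ?thesis by (simp add: prob_space)
qed

context
  fixes g :: "nat \<Rightarrow> 'a \<Rightarrow> real" and G :: real
  assumes g_F: "\<And>i. 1 \<le> i \<Longrightarrow> g i \<in> borel_measurable (F (i - 1))"
    and g_bound: "\<And>i \<omega>. 1 \<le> i \<Longrightarrow> \<bar>g i \<omega>\<bar> \<le> G"
begin

lemma integrable_bounded_mult:
  assumes "1 \<le> i" "h \<in> borel_measurable M" "integrable M h"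
  shows "integrable M (\<lambda>\<omega>. g i \<omega> * h \<omega>)"
proof (rule Bochner_Integration.integrable_bound)
  show "integrable M (\<lambda>\<omega>. G * h \<omega>)" using assms by simp
  have "0 \<le> G" by (rule order_trans[OF abs_ge_zero g_bound[OF \<open>1 \<le> i\<close>]])
  then show "AE \<omega> in M. norm (g i \<omega> * h \<omega>) \<le> norm (G * h \<omega>)"
    using g_bound[OF \<open>1 \<le> i\<close>] by (intro AE_I2) (simp add: abs_mult mult_right_mono)
qed (use assms borel_measurable_F_imp_M[OF g_F] in measurable)

lemma L2_martingale_difference_mult:
  assumes d: "L2_martingale_difference d"
  shows "L2_martingale_difference (\<lambda>i \<omega>. g i \<omega> * d i \<omega>)"
  unfolding L2_martingale_difference_def
proof (intro allI impI conjI)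
  fix i :: nat assume i: "1 \<le> i"
  note di = L2_martingale_differenceD[OF d i]
  have gM: "g i \<in> borel_measurable M" by (rule borel_measurable_F_imp_M[OF g_F[OF i]])
  have "g i \<in> borel_measurable (F i)" by (rule borel_measurable_F_mono[OF _ g_F[OF i]]) simp
  then show "(\<lambda>\<omega>. g i \<omega> * d i \<omega>) \<in> borel_measurable (F i)" using di(1) by measurable
  have "integrable M (\<lambda>\<omega>. g i \<omega> * (g i \<omega> * (d i \<omega>)\<^sup>2))"
    using i di(2,3) gM by (intro integrable_bounded_mult) auto
  then show "integrable M (\<lambda>\<omega>. (g i \<omega> * d i \<omega>)\<^sup>2)"
    by (simp add: power2_eq_square mult_ac)
  have "AE \<omega> in M. real_cond_exp M (F (i - 1)) (\<lambda>\<omega>. g i \<omega> * d i \<omega>) \<omega>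
      = g i \<omega> * real_cond_exp M (F (i - 1)) (d i) \<omega>"
    using i di by (intro sigma_finite_subalgebra.real_cond_exp_mult[OF sigma_finite_subalgebra_F]
        g_F integrable_bounded_mult)
  with di(5) show "AE \<omega> in M. real_cond_exp M (F (i - 1)) (\<lambda>\<omega>. g i \<omega> * d i \<omega>) \<omega> = 0"
    by eventually_elim simp
qed

lemma cond_var_mult:
  assumes d: "L2_martingale_difference d" and i: "1 \<le> i"
  shows "AE \<omega> in M. cond_var (\<lambda>i \<omega>. g i \<omega> * d i \<omega>) i \<omega> = (g i \<omega>)\<^sup>2 * cond_var d i \<omega>"
proof -
  note di = L2_martingale_differenceD[OF d i]
  have gM: "g i \<in> borel_measurable M" by (rule borel_measurable_F_imp_M[OF g_F[OF i]])
  have "integrable M (\<lambda>\<omega>. g i \<omega> * (g i \<omega> * (d i \<omega>)\<^sup>2))"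
    using i di(2,3) gM by (intro integrable_bounded_mult) auto
  then have "AE \<omega> in M. real_cond_exp M (F (i - 1)) (\<lambda>\<omega>. (g i \<omega>)\<^sup>2 * (d i \<omega>)\<^sup>2) \<omega>
      = (g i \<omega>)\<^sup>2 * real_cond_exp M (F (i - 1)) (\<lambda>\<omega>. (d i \<omega>)\<^sup>2) \<omega>"
    using g_F[OF i] di(2)
    by (intro sigma_finite_subalgebra.real_cond_exp_mult[OF sigma_finite_subalgebra_F])
       (auto simp: power2_eq_square mult_ac)
  then show ?thesis by (simp add: cond_var_def power_mult_distrib)
qed

end

lemma AE_bdd_above_cond_var_le:
  assumes le: "\<And>i. 1 \<le> i \<Longrightarrow> AE \<omega> in M. cond_var d' i \<omega> \<le> C * cond_var d i \<omega>"
    and "0 \<le> C" and bdd: "AE \<omega> in M. bdd_above ((\<lambda>i. cond_var d i \<omega>) ` {1..})"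
  shows "AE \<omega> in M. bdd_above ((\<lambda>i. cond_var d' i \<omega>) ` {1..})"
proof -
  have "AE \<omega> in M. \<forall>i. 1 \<le> i \<longrightarrow> cond_var d' i \<omega> \<le> C * cond_var d i \<omega>"
    using le by (simp add: AE_all_countable)
  with bdd show ?thesis
  proof eventually_elim
    case (elim \<omega>)
    then obtain B where "\<And>i. 1 \<le> i \<Longrightarrow> cond_var d i \<omega> \<le> B" by (auto simp: bdd_above_def)
    then have "\<And>i. 1 \<le> i \<Longrightarrow> cond_var d' i \<omega> \<le> C * B"
      using elim(2) \<open>0 \<le> C\<close> by (meson mult_left_mono order_trans)
    then show ?case by (auto simp: bdd_above_def)
  qed
qed

lemma martingale_difference_slln_bounded:
  assumes d: "L2_martingale_difference d"
    and bound: "\<And>i. 1 \<le> i \<Longrightarrow> AE \<omega> in M. cond_var d i \<omega> \<le> K"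
  shows "AE \<omega> in M. (\<lambda>n. (\<Sum>i=1..n. d i \<omega>) / real n) \<longlonglongrightarrow> 0"
proof (rule orthogonal_slln)
  fix i j :: nat assume i: "1 \<le> i"
  show "d i \<in> borel_measurable M" "integrable M (\<lambda>\<omega>. (d i \<omega>)\<^sup>2)"
    by (rule L2_martingale_differenceD[OF d i])+
  show "(\<integral>\<omega>. (d i \<omega>)\<^sup>2 \<partial>M) \<le> K"
    by (rule integral_square_le_of_cond_var_le[OF L2_martingale_differenceD(3)[OF d i] bound[OF i]])
  show "(\<integral>\<omega>. d i \<omega> * d j \<omega> \<partial>M) = 0" if "i < j"
    by (rule L2_martingale_difference_orthogonal[OF d i that])
qed

text \<open>Truncating each difference where its conditional variance exceeds K keeps a martingale
  difference sequence, now with conditional variances at most K.\<close>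
theorem martingale_difference_slln:
  assumes d: "L2_martingale_difference d"
    and bdd: "AE \<omega> in M. bdd_above ((\<lambda>i. cond_var d i \<omega>) ` {1..})"
  shows "AE \<omega> in M. (\<lambda>n. (\<Sum>i=1..n. d i \<omega>) / real n) \<longlonglongrightarrow> 0"
proof -
  define t where "t K i \<omega> = (if cond_var d i \<omega> \<le> real K then 1 else 0 :: real)" for K i \<omega>
  have "AE \<omega> in M. (\<lambda>n. (\<Sum>i=1..n. t K i \<omega> * d i \<omega>) / real n) \<longlonglongrightarrow> 0" for K
  proof (rule martingale_difference_slln_bounded)
    have t_F: "\<And>i. t K i \<in> borel_measurable (F (i - 1))"
      unfolding t_def cond_var_def by measurable
    have t_bound: "\<And>i \<omega>. \<bar>t K i \<omega>\<bar> \<le> 1" by (simp add: t_def)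
    show "L2_martingale_difference (\<lambda>i \<omega>. t K i \<omega> * d i \<omega>)"
      using t_F t_bound by (intro L2_martingale_difference_mult d)
    show "AE \<omega> in M. cond_var (\<lambda>i \<omega>. t K i \<omega> * d i \<omega>) i \<omega> \<le> real K" if "1 \<le> i" for i
      using cond_var_mult[OF t_F t_bound d that] by eventually_elim (simp add: t_def)
  qed
  then have "AE \<omega> in M. \<forall>K. (\<lambda>n. (\<Sum>i=1..n. t K i \<omega> * d i \<omega>) / real n) \<longlonglongrightarrow> 0"
    by (simp add: AE_all_countable)
  with bdd show ?thesis
  proof eventually_elim
    case (elim \<omega>)
    then obtain B where B: "\<And>i. 1 \<le> i \<Longrightarrow> cond_var d i \<omega> \<le> B" by (auto simp: bdd_above_def)
    have "B \<le> real (nat \<lceil>B\<rceil>)" by (rule real_nat_ceiling_ge)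
    then have "t (nat \<lceil>B\<rceil>) i \<omega> = 1" if "1 \<le> i" for i
      using B[OF that] unfolding t_def by simp
    then have "(\<Sum>i=1..n. t (nat \<lceil>B\<rceil>) i \<omega> * d i \<omega>) = (\<Sum>i=1..n. d i \<omega>)" for n
      by (intro sum.cong) auto
    with elim(2)[rule_format, of "nat \<lceil>B\<rceil>"] show ?case by simp
  qed
qed

lemma martingale_difference_slln_predictable:
  assumes d: "L2_martingale_difference d"
    and bdd: "AE \<omega> in M. bdd_above ((\<lambda>i. cond_var d i \<omega>) ` {1..})"
    and g_F: "\<And>i. 1 \<le> i \<Longrightarrow> g i \<in> borel_measurable (F (i - 1))"
    and g_bound: "\<And>i \<omega>. 1 \<le> i \<Longrightarrow> \<bar>g i \<omega>\<bar> \<le> G"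
  shows "AE \<omega> in M. (\<lambda>n. (\<Sum>i=1..n. g i \<omega> * d i \<omega>) / real n) \<longlonglongrightarrow> 0"
proof (rule martingale_difference_slln)
  show "L2_martingale_difference (\<lambda>i \<omega>. g i \<omega> * d i \<omega>)"
    by (rule L2_martingale_difference_mult[OF g_F g_bound d])
  have "AE \<omega> in M. cond_var (\<lambda>i \<omega>. g i \<omega> * d i \<omega>) i \<omega> \<le> G\<^sup>2 * cond_var d i \<omega>" if i: "1 \<le> i" for i
  proof -
    have "AE \<omega> in M. cond_var (\<lambda>i \<omega>. g i \<omega> * d i \<omega>) i \<omega> = (g i \<omega>)\<^sup>2 * cond_var d i \<omega>"
      by (rule cond_var_mult[OF g_F g_bound d i])
    moreover have "AE \<omega> in M. 0 \<le> cond_var d i \<omega>"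
      by (rule cond_var_nonneg[of d i, OF L2_martingale_differenceD(2)[OF d i]])
    ultimately show ?thesis
    proof eventually_elim
      case (elim \<omega>)
      have "(g i \<omega>)\<^sup>2 \<le> G\<^sup>2" using g_bound[OF i, of \<omega>] by (simp add: abs_le_square_iff[symmetric])
      with elim show ?case by (simp add: mult_right_mono)
    qed
  qed
  then show "AE \<omega> in M. bdd_above ((\<lambda>i. cond_var (\<lambda>i \<omega>. g i \<omega> * d i \<omega>) i \<omega>) ` {1..})"
    by (intro AE_bdd_above_cond_var_le[OF _ _ bdd]) auto
qed

definition cond_abs :: "(nat \<Rightarrow> 'a \<Rightarrow> real) \<Rightarrow> nat \<Rightarrow> 'a \<Rightarrow> real" where
  "cond_abs e i = real_cond_exp M (F (i - 1)) (\<lambda>\<omega>. \<bar>e i \<omega>\<bar>)"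

context
  fixes e :: "nat \<Rightarrow> 'a \<Rightarrow> real" and i :: nat
  assumes e_M [measurable]: "e i \<in> borel_measurable M" and e_sq: "integrable M (\<lambda>\<omega>. (e i \<omega>)\<^sup>2)"
begin

lemma integrable_abs: "integrable M (\<lambda>\<omega>. \<bar>e i \<omega>\<bar>)" "integrable M (\<lambda>\<omega>. \<bar>e i \<omega>\<bar>\<^sup>2)"
  using square_integrable_imp_integrable[OF e_M e_sq] e_sq by simp_all

lemma integrable_cond_abs: "integrable M (cond_abs e i)"
  unfolding cond_abs_def
  by (rule sigma_finite_subalgebra.real_cond_exp_int(1)[OF sigma_finite_subalgebra_F integrable_abs(1)])

lemma integrable_cond_abs_square: "integrable M (\<lambda>\<omega>. (cond_abs e i \<omega>)\<^sup>2)"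
  unfolding cond_abs_def
  by (intro sigma_finite_subalgebra.integrable_convex_cond_exp[OF sigma_finite_subalgebra_F,
        where I=UNIV] integrable_abs convex_power2) auto

lemma cond_abs_square_le_cond_var: "AE \<omega> in M. (cond_abs e i \<omega>)\<^sup>2 \<le> cond_var e i \<omega>"
  using sigma_finite_subalgebra.real_cond_exp_jensens_inequality(2)[OF sigma_finite_subalgebra_F
      integrable_abs(1), where I=UNIV and q=power2] integrable_abs(2)
  by (auto simp: cond_abs_def cond_var_def convex_power2)

lemma centered_abs_square_le: "(\<bar>e i \<omega>\<bar> - cond_abs e i \<omega>)\<^sup>2 \<le> 2 * (e i \<omega>)\<^sup>2 + 2 * (cond_abs e i \<omega>)\<^sup>2"
  using sum_squares_bound[of "\<bar>e i \<omega>\<bar>" "- cond_abs e i \<omega>"] by (simp add: power2_diff)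

lemma integrable_centered_abs_square: "integrable M (\<lambda>\<omega>. (\<bar>e i \<omega>\<bar> - cond_abs e i \<omega>)\<^sup>2)"
proof (rule Bochner_Integration.integrable_bound)
  show "integrable M (\<lambda>\<omega>. 2 * (e i \<omega>)\<^sup>2 + 2 * (cond_abs e i \<omega>)\<^sup>2)"
    using e_sq integrable_cond_abs_square by simp
  show "(\<lambda>\<omega>. (\<bar>e i \<omega>\<bar> - cond_abs e i \<omega>)\<^sup>2) \<in> borel_measurable M"
    unfolding cond_abs_def by measurable
qed (use centered_abs_square_le in auto)

lemma cond_exp_centered_abs:
  "AE \<omega> in M. real_cond_exp M (F (i - 1)) (\<lambda>\<omega>. \<bar>e i \<omega>\<bar> - cond_abs e i \<omega>) \<omega> = 0"
proof -
  interpret sigma_finite_subalgebra M "F (i - 1)" by (rule sigma_finite_subalgebra_F)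
  have "AE \<omega> in M. real_cond_exp M (F (i - 1)) (\<lambda>\<omega>. \<bar>e i \<omega>\<bar> - cond_abs e i \<omega>) \<omega>
      = real_cond_exp M (F (i - 1)) (\<lambda>\<omega>. \<bar>e i \<omega>\<bar>) \<omega> - real_cond_exp M (F (i - 1)) (cond_abs e i) \<omega>"
    by (rule real_cond_exp_diff[OF integrable_abs(1) integrable_cond_abs])
  moreover have "AE \<omega> in M. real_cond_exp M (F (i - 1)) (cond_abs e i) \<omega> = cond_abs e i \<omega>"
    by (rule real_cond_exp_F_meas[OF integrable_cond_abs]) (simp add: cond_abs_def)
  ultimately show ?thesis by eventually_elim (simp add: cond_abs_def)
qed

lemma cond_var_centered_abs_le:
  "AE \<omega> in M. cond_var (\<lambda>i \<omega>. \<bar>e i \<omega>\<bar> - cond_abs e i \<omega>) i \<omega> \<le> 4 * cond_var e i \<omega>"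
proof -
  interpret sigma_finite_subalgebra M "F (i - 1)" by (rule sigma_finite_subalgebra_F)
  have c_F: "(\<lambda>\<omega>. 2 * (cond_abs e i \<omega>)\<^sup>2) \<in> borel_measurable (F (i - 1))"
    unfolding cond_abs_def by measurable
  have "AE \<omega> in M. cond_var (\<lambda>i \<omega>. \<bar>e i \<omega>\<bar> - cond_abs e i \<omega>) i \<omega>
      \<le> real_cond_exp M (F (i - 1)) (\<lambda>\<omega>. 2 * (e i \<omega>)\<^sup>2 + 2 * (cond_abs e i \<omega>)\<^sup>2) \<omega>"
    unfolding cond_var_def using centered_abs_square_le e_sq integrable_cond_abs_square
    by (intro real_cond_exp_mono integrable_centered_abs_square) auto
  moreover have "AE \<omega> in M. real_cond_exp M (F (i - 1)) (\<lambda>\<omega>. 2 * (e i \<omega>)\<^sup>2 + 2 * (cond_abs e i \<omega>)\<^sup>2) \<omega>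
      = real_cond_exp M (F (i - 1)) (\<lambda>\<omega>. 2 * (e i \<omega>)\<^sup>2) \<omega>
        + real_cond_exp M (F (i - 1)) (\<lambda>\<omega>. 2 * (cond_abs e i \<omega>)\<^sup>2) \<omega>"
    using e_sq integrable_cond_abs_square by (intro real_cond_exp_add) auto
  moreover have "AE \<omega> in M. real_cond_exp M (F (i - 1)) (\<lambda>\<omega>. 2 * (e i \<omega>)\<^sup>2) \<omega> = 2 * cond_var e i \<omega>"
    unfolding cond_var_def using e_sq by (rule real_cond_exp_cmult)
  moreover have "AE \<omega> in M. real_cond_exp M (F (i - 1)) (\<lambda>\<omega>. 2 * (cond_abs e i \<omega>)\<^sup>2) \<omega>
      = 2 * (cond_abs e i \<omega>)\<^sup>2"
    using integrable_cond_abs_square c_F by (intro real_cond_exp_F_meas) auto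
  moreover note cond_abs_square_le_cond_var
  ultimately show ?thesis by eventually_elim simp
qed

end

lemma centered_abs_L2_martingale_difference:
  assumes e_F: "\<And>i. 1 \<le> i \<Longrightarrow> e i \<in> borel_measurable (F i)"
    and e_sq: "\<And>i. 1 \<le> i \<Longrightarrow> integrable M (\<lambda>\<omega>. (e i \<omega>)\<^sup>2)"
  shows "L2_martingale_difference (\<lambda>i \<omega>. \<bar>e i \<omega>\<bar> - cond_abs e i \<omega>)"
  unfolding L2_martingale_difference_def
proof (intro allI impI conjI)
  fix i :: nat assume i: "1 \<le> i"
  note e_M = borel_measurable_F_imp_M[OF e_F[OF i]]
  have "cond_abs e i \<in> borel_measurable (F i)"
    unfolding cond_abs_def by (rule borel_measurable_F_mono[OF _ borel_measurable_cond_exp]) simp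
  then show "(\<lambda>\<omega>. \<bar>e i \<omega>\<bar> - cond_abs e i \<omega>) \<in> borel_measurable (F i)" using e_F[OF i] by measurable
  show "integrable M (\<lambda>\<omega>. (\<bar>e i \<omega>\<bar> - cond_abs e i \<omega>)\<^sup>2)"
    by (rule integrable_centered_abs_square[of e i, OF e_M e_sq[OF i]])
  show "AE \<omega> in M. real_cond_exp M (F (i - 1)) (\<lambda>\<omega>. \<bar>e i \<omega>\<bar> - cond_abs e i \<omega>) \<omega> = 0"
    by (rule cond_exp_centered_abs[of e i, OF e_M e_sq[OF i]])
qed

lemma average_abs_eventually_bounded:
  assumes e_F: "\<And>i. 1 \<le> i \<Longrightarrow> e i \<in> borel_measurable (F i)"
    and e_sq: "\<And>i. 1 \<le> i \<Longrightarrow> integrable M (\<lambda>\<omega>. (e i \<omega>)\<^sup>2)"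
    and bdd: "AE \<omega> in M. bdd_above ((\<lambda>i. cond_var e i \<omega>) ` {1..})"
  shows "AE \<omega> in M. \<exists>A. eventually (\<lambda>n. (\<Sum>i=1..n. \<bar>e i \<omega>\<bar>) / real n \<le> A) sequentially"
proof -
  note e_M = borel_measurable_F_imp_M[OF e_F]
  have "AE \<omega> in M. (\<lambda>n. (\<Sum>i=1..n. \<bar>e i \<omega>\<bar> - cond_abs e i \<omega>) / real n) \<longlonglongrightarrow> 0"
  proof (rule martingale_difference_slln[OF centered_abs_L2_martingale_difference[OF e_F e_sq]])
    show "AE \<omega> in M. bdd_above ((\<lambda>i. cond_var (\<lambda>i \<omega>. \<bar>e i \<omega>\<bar> - cond_abs e i \<omega>) i \<omega>) ` {1..})"
      using cond_var_centered_abs_le[of e, OF e_M e_sq] by (intro AE_bdd_above_cond_var_le[OF _ _ bdd]) auto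
  qed
  moreover have "AE \<omega> in M. \<forall>i\<ge>1. (cond_abs e i \<omega>)\<^sup>2 \<le> cond_var e i \<omega>"
    unfolding AE_all_countable using cond_abs_square_le_cond_var[of e, OF e_M e_sq] by auto
  ultimately show ?thesis using bdd
  proof eventually_elim
    case (elim \<omega>)
    then obtain B where B: "\<And>i. 1 \<le> i \<Longrightarrow> cond_var e i \<omega> \<le> B" by (auto simp: bdd_above_def)
    have c_le: "cond_abs e i \<omega> \<le> (1 + B) / 2" if "1 \<le> i" for i
      using elim(2) B[OF that] that sum_squares_bound[of "cond_abs e i \<omega>" 1] by auto
    have "eventually (\<lambda>n. (\<Sum>i=1..n. \<bar>e i \<omega>\<bar> - cond_abs e i \<omega>) / real n < 1) sequentially"
      using order_tendstoD(2)[OF elim(1), of 1] by simp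
    then have "eventually (\<lambda>n. (\<Sum>i=1..n. \<bar>e i \<omega>\<bar>) / real n \<le> 1 + (1 + B) / 2) sequentially"
      using eventually_gt_at_top[of 0]
    proof eventually_elim
      case (elim n)
      have "(\<Sum>i=1..n. \<bar>e i \<omega>\<bar>) = (\<Sum>i=1..n. \<bar>e i \<omega>\<bar> - cond_abs e i \<omega>) + (\<Sum>i=1..n. cond_abs e i \<omega>)"
        by (simp add: sum_subtractf)
      also have "(\<Sum>i=1..n. cond_abs e i \<omega>) \<le> (\<Sum>i=1..n. (1 + B) / 2)" by (intro sum_mono c_le) simp
      finally show ?case using elim by (simp add: field_simps)
    qed
    then show ?case by blast
  qed
qed

lemma AE_weighted_averages_tendsto_zero:
  fixes X :: "nat \<Rightarrow> 'a \<Rightarrow> 'x::metric_space" and \<mu> :: "'x \<Rightarrow> 't::metric_space \<Rightarrow> real"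
  assumes e: "L2_martingale_difference e"
    and bdd: "AE \<omega> in M. bdd_above ((\<lambda>i. cond_var e i \<omega>) ` {1..})"
    and "compact XX" "compact TT" and mu_cont: "continuous_on (XX \<times> TT) (\<lambda>(y, \<theta>). \<mu> y \<theta>)"
    and X_F: "\<And>i. 1 \<le> i \<Longrightarrow> X i \<in> measurable (F (i - 1)) borel"
    and X_in: "\<And>i \<omega>. 1 \<le> i \<Longrightarrow> X i \<omega> \<in> XX"
    and "countable TA" "TA \<subseteq> TT" "\<theta>bar \<in> TT"
  shows "AE \<omega> in M. \<forall>t\<in>TA. (\<lambda>n. (\<Sum>i=1..n. (\<mu> (X i \<omega>) t - \<mu> (X i \<omega>) \<theta>bar) * e i \<omega>) / real n) \<longlonglongrightarrow> 0"
proof -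
  obtain G where G: "\<And>y \<theta>. y \<in> XX \<Longrightarrow> \<theta> \<in> TT \<Longrightarrow> norm (\<mu> y \<theta>) \<le> G"
    using compact_Times_bounded[OF mu_cont \<open>compact XX\<close> \<open>compact TT\<close>] by blast
  have mu_F: "(\<lambda>\<omega>. \<mu> (X i \<omega>) t) \<in> borel_measurable (F (i - 1))" if "1 \<le> i" "t \<in> TT" for i t
    using X_in that by (intro borel_measurable_continuous_on_comp[OF continuous_on_Times_fst[OF mu_cont] X_F])
  have "AE \<omega> in M. (\<lambda>n. (\<Sum>i=1..n. (\<mu> (X i \<omega>) t - \<mu> (X i \<omega>) \<theta>bar) * e i \<omega>) / real n) \<longlonglongrightarrow> 0"
    if "t \<in> TT" for t
  proof (rule martingale_difference_slln_predictable[OF e bdd])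
    show "(\<lambda>\<omega>. \<mu> (X i \<omega>) t - \<mu> (X i \<omega>) \<theta>bar) \<in> borel_measurable (F (i - 1))" if "1 \<le> i" for i
      using mu_F[OF that \<open>t \<in> TT\<close>] mu_F[OF that \<open>\<theta>bar \<in> TT\<close>] by measurable
    show "\<bar>\<mu> (X i \<omega>) t - \<mu> (X i \<omega>) \<theta>bar\<bar> \<le> 2 * G" if "1 \<le> i" for i \<omega>
      using G[OF X_in[OF that, of \<omega>] \<open>t \<in> TT\<close>] G[OF X_in[OF that, of \<omega>] \<open>\<theta>bar \<in> TT\<close>]
        abs_triangle_ineq4[of "\<mu> (X i \<omega>) t" "\<mu> (X i \<omega>) \<theta>bar"] by simp
  qed
  then show ?thesis using \<open>TA \<subseteq> TT\<close> by (subst AE_ball_countable[OF \<open>countable TA\<close>]) auto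
qed

lemma regression_errors_L2_martingale_difference:
  fixes X :: "nat \<Rightarrow> 'a \<Rightarrow> 'x::metric_space" and \<mu> :: "'x \<Rightarrow> 't::metric_space \<Rightarrow> real"
  assumes mu_cont: "continuous_on (XX \<times> TT) (\<lambda>(y, \<theta>). \<mu> y \<theta>)" and "\<theta>bar \<in> TT"
    and X_F: "\<And>i. 1 \<le> i \<Longrightarrow> X i \<in> measurable (F (i - 1)) borel"
    and X_in: "\<And>i \<omega>. 1 \<le> i \<Longrightarrow> X i \<omega> \<in> XX"
    and Y_F: "\<And>i. 1 \<le> i \<Longrightarrow> Y i \<in> borel_measurable (F i)"
    and model: "\<And>i \<omega>. 1 \<le> i \<Longrightarrow> Y i \<omega> = \<mu> (X i \<omega>) \<theta>bar + e i \<omega>"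
    and e_sq: "\<And>i. 1 \<le> i \<Longrightarrow> integrable M (\<lambda>\<omega>. (e i \<omega>)\<^sup>2)"
    and e_mean: "\<And>i. 1 \<le> i \<Longrightarrow> AE \<omega> in M. real_cond_exp M (F (i - 1)) (e i) \<omega> = 0"
  shows "L2_martingale_difference e"
  unfolding L2_martingale_difference_def
proof (intro allI impI conjI)
  fix i :: nat assume i: "1 \<le> i"
  have "(\<lambda>\<omega>. \<mu> (X i \<omega>) \<theta>bar) \<in> borel_measurable (F (i - 1))"
    using X_in i \<open>\<theta>bar \<in> TT\<close>
    by (intro borel_measurable_continuous_on_comp[OF continuous_on_Times_fst[OF mu_cont] X_F])
  then have "(\<lambda>\<omega>. \<mu> (X i \<omega>) \<theta>bar) \<in> borel_measurable (F i)"
    by (rule borel_measurable_F_mono[rotated]) simp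
  moreover have "e i = (\<lambda>\<omega>. Y i \<omega> - \<mu> (X i \<omega>) \<theta>bar)" using model[OF i] by fastforce
  ultimately show "e i \<in> borel_measurable (F i)" using Y_F[OF i] by simp
qed (use e_sq e_mean in auto)

end

section \<open>Information matrices of empirical designs\<close>

lemma inner_info_matrix:
  "w \<bullet> (info_matrix f \<xi> \<theta> *v b) = (\<Sum>y\<in>{y. \<xi> y \<noteq> 0}. \<xi> y * ((w \<bullet> f \<theta> y) * (b \<bullet> f \<theta> y)))"
proof -
  let ?S = "{y. \<xi> y \<noteq> 0}"
  have entry: "info_matrix f \<xi> \<theta> $ i $ j = (\<Sum>y\<in>?S. \<xi> y * (f \<theta> y $ i * f \<theta> y $ j))" for i j
    unfolding info_matrix_def by (simp add: sum_component outer_prod_def)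
  have "w \<bullet> (info_matrix f \<xi> \<theta> *v b)
      = (\<Sum>i\<in>UNIV. \<Sum>j\<in>UNIV. \<Sum>y\<in>?S. \<xi> y * ((w $ i * f \<theta> y $ i) * (b $ j * f \<theta> y $ j)))"
    by (simp add: inner_vec_def matrix_vector_mult_def entry sum_distrib_left sum_distrib_right mult_ac)
  also have "\<dots> = (\<Sum>y\<in>?S. \<Sum>i\<in>UNIV. \<Sum>j\<in>UNIV. \<xi> y * ((w $ i * f \<theta> y $ i) * (b $ j * f \<theta> y $ j)))"
    by (subst sum.swap) (simp add: sum.swap[of _ UNIV ?S])
  also have "\<dots> = (\<Sum>y\<in>?S. \<xi> y * ((w \<bullet> f \<theta> y) * (b \<bullet> f \<theta> y)))"
    by (simp add: inner_vec_def sum_distrib_left sum_distrib_right mult_ac)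
  finally show ?thesis .
qed

lemma sum_emp_design:
  assumes "0 < n"
  shows "(\<Sum>y\<in>{y. emp_design x n y \<noteq> 0}. emp_design x n y * G y) = (\<Sum>i=1..n. G (x i)) / real n"
proof -
  have supp: "{y. emp_design x n y \<noteq> 0} = x ` {1..n}"
    using assms by (auto simp: emp_design_def card_eq_0_iff)
  have "(\<Sum>i=1..n. G (x i)) = (\<Sum>y\<in>x ` {1..n}. \<Sum>i\<in>{i\<in>{1..n}. x i = y}. G (x i))"
    by (rule sum.image_gen) simp
  also have "\<dots> = (\<Sum>y\<in>x ` {1..n}. real (card {i\<in>{1..n}. x i = y}) * G y)"
    by (intro sum.cong refl) simp
  finally have "(\<Sum>i=1..n. G (x i)) / real n
      = (\<Sum>y\<in>x ` {1..n}. real (card {i\<in>{1..n}. x i = y}) * G y) / real n" by simp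
  also have "\<dots> = (\<Sum>y\<in>x ` {1..n}. emp_design x n y * G y)"
    by (simp add: emp_design_def sum_divide_distrib)
  finally show ?thesis by (simp add: supp)
qed

lemma inner_info_matrix_emp_design:
  assumes "0 < n"
  shows "w \<bullet> (info_matrix f (emp_design x n) \<theta> *v b)
    = (\<Sum>i=1..n. (w \<bullet> f \<theta> (x i)) * (b \<bullet> f \<theta> (x i))) / real n"
  unfolding inner_info_matrix by (rule sum_emp_design[OF assms])

lemma emp_design_cong:
  assumes "\<And>i. 1 \<le> i \<Longrightarrow> i \<le> n \<Longrightarrow> x i = y i"
  shows "emp_design x n = emp_design y n"
proof -
  have "{i\<in>{1..n}. x i = z} = {i\<in>{1..n}. y i = z}" for z using assms by auto
  then show ?thesis unfolding emp_design_def by simp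
qed

lemma pos_def_mat_invertible:
  assumes "pos_def_mat A"
  shows "invertible A"
proof -
  have "inj ((*v) A)"
  proof (rule injI)
    fix u v assume "A *v u = A *v v"
    then have "(u - v) \<bullet> (A *v (u - v)) = 0" by (simp add: matrix_vector_mult_diff_distrib)
    then show "u = v" using assms[unfolded pos_def_mat_def, rule_format, of "u - v"] by force
  qed
  then obtain B where "B ** A = mat 1" using matrix_left_invertible_injective by blast
  then show ?thesis using invertible_left_inverse by blast
qed

lemma pos_def_mat_mult_matrix_inv:
  assumes "pos_def_mat A"
  shows "A *v (matrix_inv A *v a) = a"
proof -
  have "\<exists>A'. A ** A' = mat 1 \<and> A' ** A = mat 1"
    using pos_def_mat_invertible[OF assms] by (simp add: invertible_def)
  then have "A ** matrix_inv A = mat 1" unfolding matrix_inv_def by (rule someI2_ex) simp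
  then show ?thesis by (simp add: matrix_vector_mul_assoc)
qed

section \<open>Identifiability and separation\<close>

lemma saturated_identifiable_zero_set:
  fixes \<mu> :: "'x \<Rightarrow> 't \<Rightarrow> real"
  assumes sat_ident: "\<And>z \<theta> \<theta>'. inj z \<Longrightarrow> range z \<subseteq> XX \<Longrightarrow> \<theta> \<in> TT \<Longrightarrow> \<theta>' \<in> TT \<Longrightarrow>
      (\<forall>j::'p::finite. \<mu> (z j) \<theta> = \<mu> (z j) \<theta>') \<Longrightarrow> \<theta> = \<theta>'"
    and "t \<in> TT" "t' \<in> TT" "t \<noteq> t'"
  shows "finite {y\<in>XX. \<mu> y t - \<mu> y t' = 0}" "card {y\<in>XX. \<mu> y t - \<mu> y t' = 0} < CARD('p)"
proof -
  let ?Z = "{y\<in>XX. \<mu> y t - \<mu> y t' = 0}"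
  have "\<not> (\<exists>S\<subseteq>?Z. finite S \<and> card S = CARD('p))"
  proof
    assume "\<exists>S\<subseteq>?Z. finite S \<and> card S = CARD('p)"
    then obtain S where S: "S \<subseteq> ?Z" "finite S" "card S = CARD('p)" by blast
    then obtain z where "bij_betw z (UNIV :: 'p set) S"
      using finite_same_card_bij[of "UNIV :: 'p set" S] by auto
    then have "inj z" "range z \<subseteq> XX" "\<forall>j::'p. \<mu> (z j) t = \<mu> (z j) t'"
      using S(1) by (auto simp: bij_betw_def)
    with sat_ident[OF this(1,2) assms(2,3)] show False using assms(4) by simp
  qed
  then show "finite ?Z"
    using infinite_arbitrarily_large[of ?Z "CARD('p)"] by auto
  show "card ?Z < CARD('p)"
  proof (rule ccontr)
    assume "\<not> card ?Z < CARD('p)"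
    then have "CARD('p) \<le> card ?Z" by simp
    then obtain S where "S \<subseteq> ?Z" "card S = CARD('p)" "finite S" by (rule obtain_subset_with_card_n)
    then show False using \<open>\<not> (\<exists>S\<subseteq>?Z. finite S \<and> card S = CARD('p))\<close> by blast
  qed
qed

lemma average_square_perturb:
  fixes a b :: "nat \<Rightarrow> real"
  assumes "0 < n" and close: "\<And>i. i \<in> {1..n} \<Longrightarrow> (a i - b i)\<^sup>2 < d"
  shows "(\<Sum>i=1..n. (b i)\<^sup>2) / real n / 2 - d \<le> (\<Sum>i=1..n. (a i)\<^sup>2) / real n"
proof -
  have "(b i)\<^sup>2 / 2 - d \<le> (a i)\<^sup>2" if "i \<in> {1..n}" for i
  proof -
    have "0 \<le> (a i + (a i - b i))\<^sup>2" by simp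
    then have "(b i)\<^sup>2 \<le> 2 * (a i)\<^sup>2 + 2 * (a i - b i)\<^sup>2" by (simp add: power2_eq_square algebra_simps)
    then show ?thesis using close[OF that] by simp
  qed
  then have "(\<Sum>i=1..n. (b i)\<^sup>2 / 2 - d) \<le> (\<Sum>i=1..n. (a i)\<^sup>2)" by (rule sum_mono)
  then have "(\<Sum>i=1..n. (b i)\<^sup>2) / 2 - real n * d \<le> (\<Sum>i=1..n. (a i)\<^sup>2)"
    by (simp add: sum_subtractf sum_divide_distrib[symmetric])
  then have "((\<Sum>i=1..n. (b i)\<^sup>2) / 2 - real n * d) / real n \<le> (\<Sum>i=1..n. (a i)\<^sup>2) / real n"
    by (rule divide_right_mono) simp
  then show ?thesis using \<open>0 < n\<close> by (simp add: field_simps)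
qed

lemma average_square_lower_bound_nearby:
  fixes x :: "nat \<Rightarrow> 'x::metric_space" and \<mu> :: "'x \<Rightarrow> 't::metric_space \<Rightarrow> real" and \<theta>bar :: 't
  defines "Q n \<theta> \<equiv> (\<Sum>i=1..n. (\<mu> (x i) \<theta> - \<mu> (x i) \<theta>bar)\<^sup>2) / real n"
  assumes "compact XX" "compact TT" and mu_cont: "continuous_on (XX \<times> TT) (\<lambda>(y, \<theta>). \<mu> y \<theta>)"
    and x_in: "\<And>i. 1 \<le> i \<Longrightarrow> x i \<in> XX"
    and "t \<in> TT" "0 < c" and c: "eventually (\<lambda>n. c \<le> Q n t) sequentially"
  obtains r where "0 < r" "eventually (\<lambda>n. \<forall>\<theta>\<in>TT. dist \<theta> t < r \<longrightarrow> c / 4 \<le> Q n \<theta>) sequentially"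
proof -
  have "0 < sqrt (c / 4)" using \<open>0 < c\<close> by simp
  then obtain r where "0 < r" and r: "\<And>y y' s s'. y \<in> XX \<Longrightarrow> y' \<in> XX \<Longrightarrow> s \<in> TT \<Longrightarrow> s' \<in> TT \<Longrightarrow>
      dist y y' < r \<Longrightarrow> dist s s' < r \<Longrightarrow> dist (\<mu> y s) (\<mu> y' s') < sqrt (c / 4)"
    by (rule compact_Times_uniform_continuity[OF mu_cont \<open>compact XX\<close> \<open>compact TT\<close>]) blast
  have "eventually (\<lambda>n. \<forall>\<theta>\<in>TT. dist \<theta> t < r \<longrightarrow> c / 4 \<le> Q n \<theta>) sequentially"
    using c eventually_gt_at_top[of 0]
  proof eventually_elim
    case (elim n)
    show ?case
    proof (intro ballI impI)
      fix \<theta> assume "\<theta> \<in> TT" "dist \<theta> t < r"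
      have "(\<mu> (x i) \<theta> - \<mu> (x i) \<theta>bar - (\<mu> (x i) t - \<mu> (x i) \<theta>bar))\<^sup>2 < c / 4" if "i \<in> {1..n}" for i
      proof -
        have "\<bar>\<mu> (x i) \<theta> - \<mu> (x i) t\<bar> < sqrt (c / 4)"
          using r[of "x i" "x i" \<theta> t] that x_in \<open>\<theta> \<in> TT\<close> \<open>t \<in> TT\<close> \<open>dist \<theta> t < r\<close> \<open>0 < r\<close>
          by (simp add: dist_real_def)
        then have "\<bar>\<mu> (x i) \<theta> - \<mu> (x i) t\<bar>\<^sup>2 < (sqrt (c / 4))\<^sup>2" by (intro power_strict_mono) auto
        then show ?thesis using \<open>0 < c\<close> by simp
      qed
      then have "Q n t / 2 - c / 4 \<le> Q n \<theta>"
        unfolding Q_def by (intro average_square_perturb elim(2))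
      then show "c / 4 \<le> Q n \<theta>" using elim(1) by simp
    qed
  qed
  with \<open>0 < r\<close> show ?thesis by (rule that)
qed

theorem uniform_separation:
  fixes x :: "nat \<Rightarrow> 'x::metric_space" and \<mu> :: "'x \<Rightarrow> 't::metric_space \<Rightarrow> real" and \<theta>bar :: 't
  defines "Q n \<theta> \<equiv> (\<Sum>i=1..n. (\<mu> (x i) \<theta> - \<mu> (x i) \<theta>bar)\<^sup>2) / real n"
  assumes "compact XX" "compact TT" and mu_cont: "continuous_on (XX \<times> TT) (\<lambda>(y, \<theta>). \<mu> y \<theta>)"
    and x_in: "\<And>i. 1 \<le> i \<Longrightarrow> x i \<in> XX"
    and pointwise: "\<And>t. t \<in> TT \<Longrightarrow> t \<noteq> \<theta>bar \<Longrightarrow> \<exists>c>0. eventually (\<lambda>n. c \<le> Q n t) sequentially"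
    and "0 < \<epsilon>"
  shows "\<exists>c>0. eventually (\<lambda>n. \<forall>\<theta>\<in>TT. \<epsilon> \<le> dist \<theta> \<theta>bar \<longrightarrow> c \<le> Q n \<theta>) sequentially"
proof -
  define K where "K = {\<theta>\<in>TT. \<epsilon> \<le> dist \<theta> \<theta>bar}"
  have "K = TT \<inter> {\<theta>. \<epsilon> \<le> dist \<theta> \<theta>bar}" by (auto simp: K_def)
  then have "compact K" by (auto intro!: compact_Int_closed \<open>compact TT\<close> closed_Collect_le continuous_intros)
  have "\<exists>c>0. \<exists>r>0. eventually (\<lambda>n. \<forall>\<theta>\<in>K. dist \<theta> t < r \<longrightarrow> c \<le> Q n \<theta>) sequentially"
    if "t \<in> K" for t
  proof -
    have t: "t \<in> TT" "t \<noteq> \<theta>bar" using that \<open>0 < \<epsilon>\<close> by (auto simp: K_def)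
    obtain c where "0 < c" and c: "eventually (\<lambda>n. c \<le> Q n t) sequentially" using pointwise[OF t] by blast
    obtain r where "0 < r" and r: "eventually (\<lambda>n. \<forall>\<theta>\<in>TT. dist \<theta> t < r \<longrightarrow> c / 4 \<le> Q n \<theta>) sequentially"
      using average_square_lower_bound_nearby[OF assms(2-5) t(1) \<open>0 < c\<close> c[unfolded Q_def]]
      unfolding Q_def by blast
    have "eventually (\<lambda>n. \<forall>\<theta>\<in>K. dist \<theta> t < r \<longrightarrow> c / 4 \<le> Q n \<theta>) sequentially"
      using r by eventually_elim (auto simp: K_def)
    with \<open>0 < c\<close> \<open>0 < r\<close> show ?thesis by (intro exI[of _ "c / 4"] conjI exI[of _ r]) simp_all
  qed
  from compact_eventually_uniform_lower_bound[OF \<open>compact K\<close> this]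
  obtain c where "0 < c" and "eventually (\<lambda>n. \<forall>\<theta>\<in>K. c \<le> Q n \<theta>) sequentially" by blast
  then show ?thesis by (auto simp: K_def elim!: eventually_mono)
qed

section \<open>Least squares\<close>

lemma least_squares_basic_inequality:
  fixes y a b e :: "nat \<Rightarrow> real"
  assumes min: "(\<Sum>i\<in>I. (y i - a i)\<^sup>2) \<le> (\<Sum>i\<in>I. (y i - b i)\<^sup>2)"
    and model: "\<And>i. i \<in> I \<Longrightarrow> y i = b i + e i"
  shows "(\<Sum>i\<in>I. (a i - b i)\<^sup>2) \<le> 2 * (\<Sum>i\<in>I. (a i - b i) * e i)"
proof -
  have "(\<Sum>i\<in>I. (y i - a i)\<^sup>2) = (\<Sum>i\<in>I. (e i)\<^sup>2 - 2 * ((a i - b i) * e i) + (a i - b i)\<^sup>2)"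
    using model by (intro sum.cong) (simp_all add: power2_eq_square algebra_simps)
  moreover have "(\<Sum>i\<in>I. (y i - b i)\<^sup>2) = (\<Sum>i\<in>I. (e i)\<^sup>2)"
    using model by (intro sum.cong) simp_all
  ultimately show ?thesis
    using min by (simp add: sum.distrib sum_subtractf sum_distrib_left)
qed

lemma finite_uniform_net:
  fixes \<mu> :: "'x::metric_space \<Rightarrow> 't::metric_space \<Rightarrow> real"
  assumes "compact XX" "compact TT" and mu_cont: "continuous_on (XX \<times> TT) (\<lambda>(y, \<theta>). \<mu> y \<theta>)"
    and "0 < r"
  obtains T where "finite T" "T \<subseteq> TT" "\<And>\<theta>. \<theta> \<in> TT \<Longrightarrow> \<exists>t\<in>T. \<forall>y\<in>XX. \<bar>\<mu> y \<theta> - \<mu> y t\<bar> < r"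
proof -
  obtain d where "0 < d" and d: "\<And>y y' s s'. y \<in> XX \<Longrightarrow> y' \<in> XX \<Longrightarrow> s \<in> TT \<Longrightarrow> s' \<in> TT \<Longrightarrow>
      dist y y' < d \<Longrightarrow> dist s s' < d \<Longrightarrow> dist (\<mu> y s) (\<mu> y' s') < r"
    by (rule compact_Times_uniform_continuity[OF mu_cont assms(1,2) \<open>0 < r\<close>]) blast
  have cover: "TT \<subseteq> (\<Union>t\<in>TT. ball t d)" using \<open>0 < d\<close> by auto
  obtain T where T: "T \<subseteq> TT" "finite T" "TT \<subseteq> (\<Union>t\<in>T. ball t d)"
    by (rule compactE_image[OF \<open>compact TT\<close> _ cover]) auto
  show ?thesis
  proof (rule that[OF T(2,1)])
    fix \<theta> assume "\<theta> \<in> TT"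
    then obtain t where t: "t \<in> T" "dist \<theta> t < d" using T(3) by (auto simp: dist_commute)
    show "\<exists>t\<in>T. \<forall>y\<in>XX. \<bar>\<mu> y \<theta> - \<mu> y t\<bar> < r"
    proof (intro bexI[OF _ t(1)] ballI)
      fix y assume "y \<in> XX"
      then show "\<bar>\<mu> y \<theta> - \<mu> y t\<bar> < r"
        using d[of y y \<theta> t] \<open>\<theta> \<in> TT\<close> t T(1) \<open>0 < d\<close> by (auto simp: dist_real_def)
    qed
  qed
qed

lemma countable_uniform_net:
  fixes \<mu> :: "'x::metric_space \<Rightarrow> 't::metric_space \<Rightarrow> real"
  assumes "compact XX" "compact TT" and mu_cont: "continuous_on (XX \<times> TT) (\<lambda>(y, \<theta>). \<mu> y \<theta>)"
  shows "\<exists>TA. countable TA \<and> TA \<subseteq> TT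
    \<and> (\<forall>r>0. \<exists>T. finite T \<and> T \<subseteq> TA \<and> (\<forall>\<theta>\<in>TT. \<exists>t\<in>T. \<forall>y\<in>XX. \<bar>\<mu> y \<theta> - \<mu> y t\<bar> < r))"
proof -
  have "\<forall>j. \<exists>T. finite T \<and> T \<subseteq> TT \<and> (\<forall>\<theta>\<in>TT. \<exists>t\<in>T. \<forall>y\<in>XX. \<bar>\<mu> y \<theta> - \<mu> y t\<bar> < inverse (real (Suc j)))"
  proof
    fix j
    show "\<exists>T. finite T \<and> T \<subseteq> TT \<and> (\<forall>\<theta>\<in>TT. \<exists>t\<in>T. \<forall>y\<in>XX. \<bar>\<mu> y \<theta> - \<mu> y t\<bar> < inverse (real (Suc j)))"
      by (rule finite_uniform_net[OF assms, of "inverse (real (Suc j))"]) auto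
  qed
  from choice[OF this] obtain T where T: "\<And>j. finite (T j) \<and> T j \<subseteq> TT
      \<and> (\<forall>\<theta>\<in>TT. \<exists>t\<in>T j. \<forall>y\<in>XX. \<bar>\<mu> y \<theta> - \<mu> y t\<bar> < inverse (real (Suc j)))"
    by blast
  show ?thesis
  proof (rule exI[of _ "\<Union>j. T j"], intro conjI allI impI)
    show "countable (\<Union>j. T j)" using T by (auto intro: countable_finite)
    show "(\<Union>j. T j) \<subseteq> TT" using T by auto
    fix r :: real assume "0 < r"
    then obtain j where j: "inverse (real (Suc j)) < r" using reals_Archimedean by blast
    show "\<exists>T'. finite T' \<and> T' \<subseteq> (\<Union>j. T j) \<and> (\<forall>\<theta>\<in>TT. \<exists>t\<in>T'. \<forall>y\<in>XX. \<bar>\<mu> y \<theta> - \<mu> y t\<bar> < r)"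
    proof (intro exI[of _ "T j"] conjI ballI)
      fix \<theta> assume "\<theta> \<in> TT"
      then obtain t where "t \<in> T j" "\<forall>y\<in>XX. \<bar>\<mu> y \<theta> - \<mu> y t\<bar> < inverse (real (Suc j))"
        using T by blast
      with j show "\<exists>t\<in>T j. \<forall>y\<in>XX. \<bar>\<mu> y \<theta> - \<mu> y t\<bar> < r" by force
    qed (use T in auto)
  qed
qed

lemma average_weighted_shift_le:
  fixes x :: "nat \<Rightarrow> 'x" and \<mu> :: "'x \<Rightarrow> 't \<Rightarrow> real" and e :: "nat \<Rightarrow> real"
  assumes close: "\<And>i. 1 \<le> i \<Longrightarrow> \<bar>\<mu> (x i) \<theta> - \<mu> (x i) t\<bar> \<le> r"
  shows "(\<Sum>i=1..n. (\<mu> (x i) \<theta> - \<mu> (x i) \<theta>bar) * e i) / real n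
    \<le> (\<Sum>i=1..n. (\<mu> (x i) t - \<mu> (x i) \<theta>bar) * e i) / real n + r * ((\<Sum>i=1..n. \<bar>e i\<bar>) / real n)"
proof -
  have "(\<mu> (x i) \<theta> - \<mu> (x i) \<theta>bar) * e i \<le> (\<mu> (x i) t - \<mu> (x i) \<theta>bar) * e i + r * \<bar>e i\<bar>"
    if "i \<in> {1..n}" for i
  proof -
    have "(\<mu> (x i) \<theta> - \<mu> (x i) t) * e i \<le> \<bar>\<mu> (x i) \<theta> - \<mu> (x i) t\<bar> * \<bar>e i\<bar>"
      by (simp flip: abs_mult)
    also have "\<dots> \<le> r * \<bar>e i\<bar>" using close that by (intro mult_right_mono) auto
    finally show ?thesis by (simp add: algebra_simps)
  qed
  then have "(\<Sum>i=1..n. (\<mu> (x i) \<theta> - \<mu> (x i) \<theta>bar) * e i)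
      \<le> (\<Sum>i=1..n. (\<mu> (x i) t - \<mu> (x i) \<theta>bar) * e i + r * \<bar>e i\<bar>)"
    by (rule sum_mono)
  also have "\<dots> = (\<Sum>i=1..n. (\<mu> (x i) t - \<mu> (x i) \<theta>bar) * e i) + r * (\<Sum>i=1..n. \<bar>e i\<bar>)"
    by (simp add: sum.distrib sum_distrib_left)
  finally have "(\<Sum>i=1..n. (\<mu> (x i) \<theta> - \<mu> (x i) \<theta>bar) * e i)
      \<le> (\<Sum>i=1..n. (\<mu> (x i) t - \<mu> (x i) \<theta>bar) * e i) + r * (\<Sum>i=1..n. \<bar>e i\<bar>)" .
  then show ?thesis by (simp add: divide_right_mono flip: add_divide_distrib)
qed

text \<open>A finite net of parameters reduces the uniform statement to finitely many averages, since the
  averages of |e i| stay bounded.\<close>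
lemma uniform_noise_average:
  fixes x :: "nat \<Rightarrow> 'x" and \<mu> :: "'x \<Rightarrow> 't \<Rightarrow> real" and e :: "nat \<Rightarrow> real" and A \<delta> :: real
  assumes net: "\<And>r. 0 < r \<Longrightarrow> \<exists>T. finite T \<and> T \<subseteq> TA \<and> (\<forall>\<theta>\<in>TT. \<exists>t\<in>T. \<forall>y\<in>XX. \<bar>\<mu> y \<theta> - \<mu> y t\<bar> < r)"
    and conv: "\<And>t. t \<in> TA \<Longrightarrow> (\<lambda>n. (\<Sum>i=1..n. (\<mu> (x i) t - \<mu> (x i) \<theta>bar) * e i) / real n) \<longlonglongrightarrow> 0"
    and abs_bound: "eventually (\<lambda>n. (\<Sum>i=1..n. \<bar>e i\<bar>) / real n \<le> A) sequentially"
    and x_in: "\<And>i. 1 \<le> i \<Longrightarrow> x i \<in> XX"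
    and "0 < \<delta>"
  shows "eventually (\<lambda>n. \<forall>\<theta>\<in>TT. (\<Sum>i=1..n. (\<mu> (x i) \<theta> - \<mu> (x i) \<theta>bar) * e i) / real n < \<delta>) sequentially"
proof -
  define r where "r = \<delta> / (2 * max A 1)"
  have "0 < r" unfolding r_def using \<open>0 < \<delta>\<close> by (intro divide_pos_pos) auto
  then obtain T where T: "finite T" "T \<subseteq> TA" "\<forall>\<theta>\<in>TT. \<exists>t\<in>T. \<forall>y\<in>XX. \<bar>\<mu> y \<theta> - \<mu> y t\<bar> < r"
    using net[OF \<open>0 < r\<close>] by blast
  have "eventually (\<lambda>n. (\<Sum>i=1..n. (\<mu> (x i) t - \<mu> (x i) \<theta>bar) * e i) / real n < \<delta> / 2) sequentially"
    if "t \<in> T" for t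
    using conv[of t] that T(2) \<open>0 < \<delta>\<close> by (intro order_tendstoD(2)) auto
  then have "eventually (\<lambda>n. \<forall>t\<in>T. (\<Sum>i=1..n. (\<mu> (x i) t - \<mu> (x i) \<theta>bar) * e i) / real n < \<delta> / 2)
      sequentially"
    using T(1) by (intro eventually_ball_finite) auto
  then show ?thesis using abs_bound
  proof eventually_elim
    case (elim n)
    show ?case
    proof
      fix \<theta> assume "\<theta> \<in> TT"
      then obtain t where "t \<in> T" and t: "\<forall>y\<in>XX. \<bar>\<mu> y \<theta> - \<mu> y t\<bar> < r" using T(3) by blast
      have "r * ((\<Sum>i=1..n. \<bar>e i\<bar>) / real n) \<le> r * max A 1"
        using elim(2) \<open>0 < r\<close> by (intro mult_left_mono) auto
      also have "\<dots> = \<delta> / 2" by (simp add: r_def)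
      finally have "r * ((\<Sum>i=1..n. \<bar>e i\<bar>) / real n) \<le> \<delta> / 2" .
      moreover have "(\<Sum>i=1..n. (\<mu> (x i) \<theta> - \<mu> (x i) \<theta>bar) * e i) / real n
          \<le> (\<Sum>i=1..n. (\<mu> (x i) t - \<mu> (x i) \<theta>bar) * e i) / real n + r * ((\<Sum>i=1..n. \<bar>e i\<bar>) / real n)"
        using t x_in by (intro average_weighted_shift_le) (simp add: less_imp_le)
      moreover have "(\<Sum>i=1..n. (\<mu> (x i) t - \<mu> (x i) \<theta>bar) * e i) / real n < \<delta> / 2"
        using elim(1) \<open>t \<in> T\<close> by blast
      ultimately show "(\<Sum>i=1..n. (\<mu> (x i) \<theta> - \<mu> (x i) \<theta>bar) * e i) / real n < \<delta>" by linarith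
    qed
  qed
qed

text \<open>Beyond distance \<epsilon> the squared model distance grows linearly in n, while the least squares
  inequality bounds it by twice a noise term that grows sublinearly.\<close>
lemma least_squares_consistent:
  fixes \<mu> :: "'x \<Rightarrow> 't::metric_space \<Rightarrow> real"
  assumes separation: "\<And>\<epsilon>. 0 < \<epsilon> \<Longrightarrow> \<exists>c>0. eventually (\<lambda>n. \<forall>\<theta>\<in>TT. \<epsilon> \<le> dist \<theta> \<theta>bar \<longrightarrow>
        c \<le> (\<Sum>i=1..n. (\<mu> (x i) \<theta> - \<mu> (x i) \<theta>bar)\<^sup>2) / real n) sequentially"
    and noise: "\<And>\<delta>. 0 < \<delta> \<Longrightarrow>
      eventually (\<lambda>n. \<forall>\<theta>\<in>TT. (\<Sum>i=1..n. (\<mu> (x i) \<theta> - \<mu> (x i) \<theta>bar) * e i) / real n < \<delta>) sequentially"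
    and LS: "eventually (\<lambda>n. th n \<in> TT \<and> (\<Sum>i=1..n. (\<mu> (x i) (th n) - \<mu> (x i) \<theta>bar)\<^sup>2)
      \<le> 2 * (\<Sum>i=1..n. (\<mu> (x i) (th n) - \<mu> (x i) \<theta>bar) * e i)) sequentially"
  shows "th \<longlonglongrightarrow> \<theta>bar"
proof (rule tendstoI)
  fix \<epsilon> :: real assume "0 < \<epsilon>"
  then obtain c where "0 < c" and sep: "eventually (\<lambda>n. \<forall>\<theta>\<in>TT. \<epsilon> \<le> dist \<theta> \<theta>bar \<longrightarrow>
      c \<le> (\<Sum>i=1..n. (\<mu> (x i) \<theta> - \<mu> (x i) \<theta>bar)\<^sup>2) / real n) sequentially"
    using separation by blast
  have "eventually (\<lambda>n. \<forall>\<theta>\<in>TT. (\<Sum>i=1..n. (\<mu> (x i) \<theta> - \<mu> (x i) \<theta>bar) * e i) / real n < c / 2)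
      sequentially" by (rule noise) (use \<open>0 < c\<close> in simp)
  with sep LS show "eventually (\<lambda>n. dist (th n) \<theta>bar < \<epsilon>) sequentially"
  proof eventually_elim
    case (elim n)
    show ?case
    proof (rule ccontr)
      assume "\<not> dist (th n) \<theta>bar < \<epsilon>"
      then have "c \<le> (\<Sum>i=1..n. (\<mu> (x i) (th n) - \<mu> (x i) \<theta>bar)\<^sup>2) / real n" using elim(1,2) by simp
      also have "\<dots> \<le> 2 * ((\<Sum>i=1..n. (\<mu> (x i) (th n) - \<mu> (x i) \<theta>bar) * e i) / real n)"
        using elim(2) by (simp add: divide_right_mono)
      also have "\<dots> < c" using bspec[OF elim(3) conjunct1[OF elim(2)]] by (simp add: mult_ac)
      finally show False by simp
    qed
  qed
qed

section \<open>The adaptive Wynn design\<close>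

lemma card_hits_le:
  fixes P :: "nat \<Rightarrow> bool"
  assumes "0 \<le> K"
    and before_hit: "\<And>n. n0 \<le> n \<Longrightarrow> n < N \<Longrightarrow> P (Suc n) \<Longrightarrow> real (card {i\<in>{1..n}. P i}) \<le> K"
  shows "real (card {i\<in>{1..N}. P i}) \<le> real n0 + K + 1"
proof -
  have "real (card {i\<in>{1..m}. P i}) \<le> real n0 + K + 1" if "m \<le> N" for m
    using that
  proof (induction m)
    case 0
    then show ?case using \<open>0 \<le> K\<close> by simp
  next
    case (Suc m)
    have split: "{i\<in>{1..Suc m}. P i} = {i\<in>{1..m}. P i} \<union> (if P (Suc m) then {Suc m} else {})"
      by (auto simp: le_Suc_eq)
    consider "P (Suc m)" "n0 \<le> m" | "P (Suc m)" "m < n0" | "\<not> P (Suc m)" by linarith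
    then show ?case
    proof cases
      case 1
      then have "real (card {i\<in>{1..m}. P i}) \<le> K" using Suc.prems by (intro before_hit) auto
      then show ?thesis unfolding split using 1 by simp
    next
      case 2
      have "card {i\<in>{1..Suc m}. P i} \<le> card {1..Suc m}" by (intro card_mono) auto
      then show ?thesis using 2 \<open>0 \<le> K\<close> by simp
    next
      case 3
      then show ?thesis unfolding split using Suc by simp
    qed
  qed
  then show ?thesis by simp
qed

lemma exists_unit_orthogonal_image:
  fixes g :: "'a \<Rightarrow> 'b::euclidean_space"
  assumes "finite Z" "card Z < DIM('b)"
  obtains v where "norm v = 1" "\<And>z. z \<in> Z \<Longrightarrow> v \<bullet> g z = 0"
proof -
  have "dim (g ` Z) \<le> card (g ` Z)"
    by (rule dim_le_card) (auto intro!: span_base simp: assms(1))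
  also have "\<dots> \<le> card Z" by (rule card_image_le[OF assms(1)])
  finally obtain v where v: "v \<noteq> 0" "\<And>y. y \<in> span (g ` Z) \<Longrightarrow> orthogonal v y"
    using orthogonal_to_subspace_exists[of "g ` Z"] assms(2) by auto
  show ?thesis
  proof (rule that[of "v /\<^sub>R norm v"])
    show "\<And>z. z \<in> Z \<Longrightarrow> (v /\<^sub>R norm v) \<bullet> g z = 0"
      using v(2) by (simp add: orthogonal_def span_base)
  qed (use v in simp)
qed

text \<open>Each point of Z is visited at most n0 + 1 times more than the bound allows, and every other
  design point is far from Z.\<close>
lemma card_far_lower_bound:
  fixes x :: "nat \<Rightarrow> 'x::metric_space" and Z :: "'x set" and r :: real
  defines "far n \<equiv> card {i\<in>{1..n}. \<forall>z\<in>Z. r \<le> dist (x i) z}"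
  assumes "finite Z" "0 \<le> a" "0 \<le> b"
    and visits: "\<And>n z. n0 \<le> n \<Longrightarrow> n < N \<Longrightarrow> z \<in> Z \<Longrightarrow> dist (x (Suc n)) z < r \<Longrightarrow>
      real (card {i\<in>{1..n}. dist (x i) z < r}) \<le> a * real n + b * real (far n)"
  shows "real N \<le> real (card Z) * (real n0 + 1 + a * real N + b * real (far N)) + real (far N)"
proof -
  have far_mono: "far n \<le> far N" if "n \<le> N" for n
    unfolding far_def using that by (intro card_mono) auto
  have visits_N: "real (card {i\<in>{1..N}. dist (x i) z < r}) \<le> real n0 + (a * real N + b * real (far N)) + 1"
    if z: "z \<in> Z" for z
  proof (rule card_hits_le)
    show "0 \<le> a * real N + b * real (far N)" using assms(3,4) by simp
    fix n assume n: "n0 \<le> n" "n < N" "dist (x (Suc n)) z < r"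
    have "real (card {i\<in>{1..n}. dist (x i) z < r}) \<le> a * real n + b * real (far n)"
      using visits n z by blast
    also have "\<dots> \<le> a * real N + b * real (far N)"
      using n far_mono[of n] assms(3,4) by (intro add_mono mult_left_mono) auto
    finally show "real (card {i\<in>{1..n}. dist (x i) z < r}) \<le> a * real N + b * real (far N)" .
  qed
  have "{1..N} \<subseteq> (\<Union>z\<in>Z. {i\<in>{1..N}. dist (x i) z < r}) \<union> {i\<in>{1..N}. \<forall>z\<in>Z. r \<le> dist (x i) z}"
    by (auto simp: not_less[symmetric])
  then have "N \<le> card ((\<Union>z\<in>Z. {i\<in>{1..N}. dist (x i) z < r}) \<union> {i\<in>{1..N}. \<forall>z\<in>Z. r \<le> dist (x i) z})"
    using card_mono[of _ "{1..N}"] \<open>finite Z\<close> by fastforce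
  also have "\<dots> \<le> (\<Sum>z\<in>Z. card {i\<in>{1..N}. dist (x i) z < r}) + far N"
    unfolding far_def by (intro order_trans[OF card_Un_le] add_mono card_UN_le \<open>finite Z\<close>) simp
  finally have "real N \<le> (\<Sum>z\<in>Z. real (card {i\<in>{1..N}. dist (x i) z < r})) + real (far N)"
    by (simp flip: of_nat_sum of_nat_add)
  also have "\<dots> \<le> (\<Sum>z\<in>Z. real n0 + (a * real N + b * real (far N)) + 1) + real (far N)"
    by (intro add_right_mono sum_mono visits_N)
  finally show ?thesis by (simp add: algebra_simps)
qed

text \<open>A single sample path of the adaptive Wynn algorithm: x i is the i-th design point and th n
  the estimate used at stage n; the initial design consists of the first n_st points of x.\<close>
locale wynn_design =
  fixes XX :: "'x::metric_space set" and TT :: "'t::metric_space set"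
    and f :: "'t \<Rightarrow> 'x \<Rightarrow> real ^ 'p::finite"
    and n_st :: nat and x :: "nat \<Rightarrow> 'x" and th :: "nat \<Rightarrow> 't"
  assumes compact_XX: "compact XX" and compact_TT: "compact TT"
    and f_cont: "continuous_on (XX \<times> TT) (\<lambda>(y, \<theta>). f \<theta> y)"
    and x_in: "\<And>i. 1 \<le> i \<Longrightarrow> x i \<in> XX"
    and th_in: "\<And>n. n_st \<le> n \<Longrightarrow> th n \<in> TT"
    and init_pd: "\<And>\<theta>. \<theta> \<in> TT \<Longrightarrow> pos_def_mat (info_matrix f (emp_design x n_st) \<theta>)"
    and wynn_max: "\<And>n y. n_st \<le> n \<Longrightarrow> y \<in> XX \<Longrightarrow>
      f (th n) y \<bullet> (matrix_inv (info_matrix f (emp_design x n) (th n)) *v f (th n) y)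
      \<le> f (th n) (x (Suc n)) \<bullet> (matrix_inv (info_matrix f (emp_design x n) (th n)) *v f (th n) (x (Suc n)))"
begin

definition info :: "nat \<Rightarrow> real ^ 'p ^ 'p" where
  "info n = info_matrix f (emp_design x n) (th n)"

definition sensitivity :: "nat \<Rightarrow> real ^ 'p \<Rightarrow> real" where
  "sensitivity n a = a \<bullet> (matrix_inv (info n) *v a)"

definition sum_sq_proj :: "nat \<Rightarrow> real ^ 'p \<Rightarrow> real" where
  "sum_sq_proj n v = (\<Sum>i=1..n. (v \<bullet> f (th n) (x i))\<^sup>2)"

lemma sensitivity_le_new_point:
  "n_st \<le> n \<Longrightarrow> y \<in> XX \<Longrightarrow> sensitivity n (f (th n) y) \<le> sensitivity n (f (th n) (x (Suc n)))"
  unfolding sensitivity_def info_def by (rule wynn_max)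

lemma sum_sq_proj_nonneg: "0 \<le> sum_sq_proj n v"
  unfolding sum_sq_proj_def by (simp add: sum_nonneg)

lemma n_st_pos: "0 < n_st"
proof (rule ccontr)
  assume "\<not> 0 < n_st"
  then have "info_matrix f (emp_design x n_st) (th n_st) = 0"
    by (simp add: info_matrix_def emp_design_def)
  moreover have "(1 :: real ^ 'p) \<noteq> 0" by (simp add: vec_eq_iff)
  ultimately show False using init_pd[OF th_in] unfolding pos_def_mat_def by force
qed

lemma quadratic_form_info:
  "n_st \<le> n \<Longrightarrow> w \<bullet> (info n *v b) = (\<Sum>i=1..n. (w \<bullet> f (th n) (x i)) * (b \<bullet> f (th n) (x i))) / real n"
  unfolding info_def using n_st_pos by (intro inner_info_matrix_emp_design) simp

lemma quadratic_form_info_eq: "n_st \<le> n \<Longrightarrow> v \<bullet> (info n *v v) = sum_sq_proj n v / real n"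
  by (simp add: quadratic_form_info sum_sq_proj_def power2_eq_square)

lemma info_pos_def:
  assumes n: "n_st \<le> n"
  shows "pos_def_mat (info n)"
  unfolding pos_def_mat_def
proof (intro allI impI)
  fix v :: "real ^ 'p" assume "v \<noteq> 0"
  then have "0 < v \<bullet> (info_matrix f (emp_design x n_st) (th n) *v v)"
    using init_pd[OF th_in[OF n]] by (simp add: pos_def_mat_def)
  also have "\<dots> = (\<Sum>i=1..n_st. (v \<bullet> f (th n) (x i))\<^sup>2) / real n_st"
    using n_st_pos by (simp add: inner_info_matrix_emp_design power2_eq_square)
  finally have "0 < (\<Sum>i=1..n_st. (v \<bullet> f (th n) (x i))\<^sup>2)"
    by (simp add: zero_less_divide_iff)
  also have "\<dots> \<le> sum_sq_proj n v"
    unfolding sum_sq_proj_def using n by (intro sum_mono2) auto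
  finally show "0 < v \<bullet> (info n *v v)"
    using n n_st_pos by (simp add: quadratic_form_info_eq)
qed

lemma info_mult_matrix_inv: "n_st \<le> n \<Longrightarrow> info n *v (matrix_inv (info n) *v a) = a"
  by (rule pos_def_mat_mult_matrix_inv[OF info_pos_def])

lemma sensitivity_eq:
  assumes "n_st \<le> n"
  shows "sensitivity n a = sum_sq_proj n (matrix_inv (info n) *v a) / real n"
  unfolding sensitivity_def
  using quadratic_form_info_eq[OF assms] info_mult_matrix_inv[OF assms, of a]
  by (metis inner_commute)

lemma sensitivity_nonneg: "n_st \<le> n \<Longrightarrow> 0 \<le> sensitivity n a"
  by (simp add: sensitivity_eq sum_sq_proj_nonneg)

lemma inner_square_le_sensitivity:
  assumes n: "n_st \<le> n"
  shows "(v \<bullet> a)\<^sup>2 \<le> sum_sq_proj n v * sensitivity n a / real n"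
proof -
  let ?b = "matrix_inv (info n) *v a"
  have "v \<bullet> a = (\<Sum>i=1..n. (v \<bullet> f (th n) (x i)) * (?b \<bullet> f (th n) (x i))) / real n"
    using quadratic_form_info[OF n, of v ?b] by (simp add: info_mult_matrix_inv[OF n])
  then have "(v \<bullet> a)\<^sup>2 = (\<Sum>i=1..n. (v \<bullet> f (th n) (x i)) * (?b \<bullet> f (th n) (x i)))\<^sup>2 / (real n)\<^sup>2"
    by (simp add: power_divide)
  also have "\<dots> \<le> sum_sq_proj n v * sum_sq_proj n ?b / (real n)\<^sup>2"
    unfolding sum_sq_proj_def by (intro divide_right_mono Cauchy_Schwarz_ineq_sum) simp
  also have "\<dots> = sum_sq_proj n v * sensitivity n a / real n"
    using n n_st_pos by (simp add: sensitivity_eq power2_eq_square)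
  finally show ?thesis .
qed

lemma init_design_coercive:
  obtains l0 where "0 < l0" "\<And>\<theta> v. \<theta> \<in> TT \<Longrightarrow> l0 * (norm v)\<^sup>2 \<le> (\<Sum>k=1..n_st. (v \<bullet> f \<theta> (x k))\<^sup>2)"
proof -
  define h where "h p = (\<Sum>k=1..n_st. (snd p \<bullet> f (fst p) (x k))\<^sup>2)" for p :: "'t \<times> (real ^ 'p)"
  let ?S = "TT \<times> sphere (0 :: real ^ 'p) 1"
  have ne: "?S \<noteq> {}" using th_in[of n_st] vector_choose_size[of 1] by auto
  have cont: "continuous_on ?S h"
  proof -
    have "continuous_on ?S (\<lambda>p. f (fst p) (x k))" if "k \<in> {1..n_st}" for k
      using that x_in
      by (intro continuous_on_compose2[OF continuous_on_Times_snd[OF f_cont] continuous_on_fst]) auto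
    then show ?thesis unfolding h_def by (auto intro!: continuous_intros)
  qed
  obtain p0 where p0: "p0 \<in> ?S" and min: "\<And>p. p \<in> ?S \<Longrightarrow> h p0 \<le> h p"
    using continuous_attains_inf[OF compact_Times[OF compact_TT compact_sphere] ne cont] by blast
  have "snd p0 \<noteq> 0" using p0 by auto
  then have "0 < snd p0 \<bullet> (info_matrix f (emp_design x n_st) (fst p0) *v snd p0)"
    using init_pd[of "fst p0"] p0 unfolding pos_def_mat_def by auto
  also have "\<dots> = h p0 / real n_st"
    unfolding h_def using n_st_pos by (simp add: inner_info_matrix_emp_design power2_eq_square)
  finally have "0 < h p0" by (simp add: zero_less_divide_iff)
  moreover have "h p0 * (norm v)\<^sup>2 \<le> (\<Sum>k=1..n_st. (v \<bullet> f \<theta> (x k))\<^sup>2)" if "\<theta> \<in> TT" for \<theta> v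
  proof (cases "v = 0")
    case False
    have le: "h p0 \<le> h (\<theta>, v /\<^sub>R norm v)" using that False by (intro min) simp
    have "h (\<theta>, v /\<^sub>R norm v) * (norm v)\<^sup>2 = (\<Sum>k=1..n_st. (v \<bullet> f \<theta> (x k))\<^sup>2)"
      unfolding h_def using False
      by (simp add: power_mult_distrib sum_distrib_left[symmetric] sum_distrib_right power_inverse
          mult.assoc[symmetric])
    with mult_right_mono[OF le, of "(norm v)\<^sup>2"] show ?thesis by simp
  qed simp
  ultimately show ?thesis by (rule that)
qed

text \<open>Each initial point has sensitivity at most that of the new point, so the initial design
  bounds the new point's sensitivity from below in every direction.\<close>
lemma sensitivity_new_point_lower:
  assumes n: "n_st \<le> n"
    and l0: "l0 * (norm v)\<^sup>2 \<le> (\<Sum>k=1..n_st. (v \<bullet> f (th n) (x k))\<^sup>2)"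
  shows "l0 * (norm v)\<^sup>2 * real n \<le> real n_st * sensitivity n (f (th n) (x (Suc n))) * sum_sq_proj n v"
proof -
  let ?D = "sensitivity n (f (th n) (x (Suc n)))"
  have "(\<Sum>k=1..n_st. (v \<bullet> f (th n) (x k))\<^sup>2) \<le> (\<Sum>k=1..n_st. sum_sq_proj n v * ?D / real n)"
  proof (rule sum_mono)
    fix k assume "k \<in> {1..n_st}"
    then have "sensitivity n (f (th n) (x k)) \<le> ?D"
      using n x_in by (intro sensitivity_le_new_point) auto
    then show "(v \<bullet> f (th n) (x k))\<^sup>2 \<le> sum_sq_proj n v * ?D / real n"
      using inner_square_le_sensitivity[OF n, of v "f (th n) (x k)"] sum_sq_proj_nonneg[of n v]
      by (meson divide_right_mono mult_left_mono of_nat_0_le_iff order_trans)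
  qed
  with l0 have "l0 * (norm v)\<^sup>2 \<le> real n_st * (sum_sq_proj n v * ?D) / real n" by simp
  then show ?thesis using n n_st_pos by (simp add: field_simps)
qed

lemma sensitivity_new_point_pos:
  assumes n: "n_st \<le> n"
    and l0: "0 < l0" "\<And>v. l0 * (norm v)\<^sup>2 \<le> (\<Sum>k=1..n_st. (v \<bullet> f (th n) (x k))\<^sup>2)"
  shows "0 < sensitivity n (f (th n) (x (Suc n)))"
proof -
  have "0 < l0 * (norm (1 :: real ^ 'p))\<^sup>2 * real n" using l0(1) n n_st_pos by (simp add: vec_eq_iff)
  also have "\<dots> \<le> real n_st * sensitivity n (f (th n) (x (Suc n))) * sum_sq_proj n 1"
    by (rule sensitivity_new_point_lower[OF n l0(2)])
  finally show ?thesis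
    using sensitivity_nonneg[OF n, of "f (th n) (x (Suc n))"] sum_sq_proj_nonneg[of n 1]
    by (auto simp: zero_less_mult_iff)
qed

lemma norm_inverse_new_point_le:
  assumes n: "n_st \<le> n"
    and l0: "0 < l0" "\<And>v. l0 * (norm v)\<^sup>2 \<le> (\<Sum>k=1..n_st. (v \<bullet> f (th n) (x k))\<^sup>2)"
    and \<eta>: "4 * \<eta>\<^sup>2 * real n_st \<le> l0"
  shows "2 * \<eta> * norm (matrix_inv (info n) *v f (th n) (x (Suc n))) \<le> sensitivity n (f (th n) (x (Suc n)))"
proof (rule ccontr)
  define w where "w = matrix_inv (info n) *v f (th n) (x (Suc n))"
  define D where "D = sensitivity n (f (th n) (x (Suc n)))"
  have "0 < D" unfolding D_def by (rule sensitivity_new_point_pos[OF n l0])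
  have "l0 * (norm w)\<^sup>2 * real n \<le> real n_st * D * sum_sq_proj n w"
    unfolding D_def by (rule sensitivity_new_point_lower[OF n l0(2)])
  also have "sum_sq_proj n w = real n * D" using n n_st_pos by (simp add: D_def w_def sensitivity_eq)
  finally have w_le: "l0 * (norm w)\<^sup>2 \<le> real n_st * D\<^sup>2"
    using n n_st_pos by (simp add: power2_eq_square)
  assume "\<not> 2 * \<eta> * norm (matrix_inv (info n) *v f (th n) (x (Suc n))) \<le> sensitivity n (f (th n) (x (Suc n)))"
  then have "real n_st * D\<^sup>2 < real n_st * (2 * \<eta> * norm w)\<^sup>2"
    using \<open>0 < D\<close> n_st_pos by (intro mult_strict_left_mono power_strict_mono) (auto simp: D_def w_def)
  also have "\<dots> = (4 * \<eta>\<^sup>2 * real n_st) * (norm w)\<^sup>2" by (simp add: power_mult_distrib)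
  also have "\<dots> \<le> l0 * (norm w)\<^sup>2" using \<eta> by (intro mult_right_mono) auto
  finally show False using w_le by simp
qed

text \<open>The direction w = M_n^-1 f(x_(n+1)) has projection at least D/2 on every point close to the
  new point, D being the sensitivity of the new point, while its squared projections sum to n D.\<close>
lemma card_near_new_point_sensitivity_le:
  assumes n: "n_st \<le> n"
    and l0: "0 < l0" "\<And>v. l0 * (norm v)\<^sup>2 \<le> (\<Sum>k=1..n_st. (v \<bullet> f (th n) (x k))\<^sup>2)"
    and \<eta>: "0 \<le> \<eta>" "4 * \<eta>\<^sup>2 * real n_st \<le> l0"
    and \<rho>: "\<And>y. y \<in> XX \<Longrightarrow> dist y (x (Suc n)) < \<rho> \<Longrightarrow> norm (f (th n) y - f (th n) (x (Suc n))) \<le> \<eta>"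
  shows "real (card {i\<in>{1..n}. dist (x i) (x (Suc n)) < \<rho>}) * sensitivity n (f (th n) (x (Suc n))) \<le> 4 * real n"
proof -
  define u where "u = f (th n) (x (Suc n))"
  define w where "w = matrix_inv (info n) *v u"
  define D where "D = sensitivity n u"
  have "0 < D" unfolding D_def u_def by (rule sensitivity_new_point_pos[OF n l0])
  have w_le: "2 * \<eta> * norm w \<le> D"
    unfolding D_def w_def u_def by (rule norm_inverse_new_point_le[OF n l0 \<eta>(2)])
  let ?B = "{i\<in>{1..n}. dist (x i) (x (Suc n)) < \<rho>}"
  have near: "D\<^sup>2 / 4 \<le> (w \<bullet> f (th n) (x i))\<^sup>2" if "i \<in> ?B" for i
  proof -
    have "norm (f (th n) (x i) - u) \<le> \<eta>" unfolding u_def using that x_in by (intro \<rho>) auto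
    then have "\<bar>w \<bullet> (f (th n) (x i) - u)\<bar> \<le> norm w * \<eta>"
      by (meson Cauchy_Schwarz_ineq2 mult_left_mono norm_ge_zero order_trans)
    moreover have "D = w \<bullet> u" unfolding D_def sensitivity_def w_def by (simp add: inner_commute)
    ultimately have "D / 2 \<le> w \<bullet> f (th n) (x i)"
      using w_le by (simp add: inner_diff_right abs_le_iff mult_ac)
    then have "(D / 2)\<^sup>2 \<le> (w \<bullet> f (th n) (x i))\<^sup>2" using \<open>0 < D\<close> by (intro power_mono) auto
    then show ?thesis by (simp add: power_divide)
  qed
  have "real (card ?B) * (D\<^sup>2 / 4) = (\<Sum>i\<in>?B. D\<^sup>2 / 4)" by simp
  also have "\<dots> \<le> (\<Sum>i\<in>?B. (w \<bullet> f (th n) (x i))\<^sup>2)" by (intro sum_mono near)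
  also have "\<dots> \<le> sum_sq_proj n w" unfolding sum_sq_proj_def by (intro sum_mono2) auto
  also have "\<dots> = real n * D" using n n_st_pos by (simp add: D_def w_def sensitivity_eq)
  finally have "real (card ?B) * D * D \<le> 4 * real n * D" by (simp add: power2_eq_square field_simps)
  then show ?thesis using \<open>0 < D\<close> by (simp add: D_def u_def)
qed

lemma card_near_new_point_le:
  assumes n: "n_st \<le> n"
    and l0: "0 < l0" "\<And>v. l0 * (norm v)\<^sup>2 \<le> (\<Sum>k=1..n_st. (v \<bullet> f (th n) (x k))\<^sup>2)"
    and \<eta>: "0 \<le> \<eta>" "4 * \<eta>\<^sup>2 * real n_st \<le> l0"
    and \<rho>: "\<And>y. y \<in> XX \<Longrightarrow> dist y (x (Suc n)) < \<rho> \<Longrightarrow> norm (f (th n) y - f (th n) (x (Suc n))) \<le> \<eta>"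
    and v: "norm v = 1"
  shows "real (card {i\<in>{1..n}. dist (x i) (x (Suc n)) < \<rho>}) * l0 \<le> 4 * real n_st * sum_sq_proj n v"
proof -
  let ?C = "real (card {i\<in>{1..n}. dist (x i) (x (Suc n)) < \<rho>})"
  let ?D = "sensitivity n (f (th n) (x (Suc n)))"
  have "?C * l0 * real n \<le> ?C * (real n_st * ?D * sum_sq_proj n v)"
    using sensitivity_new_point_lower[OF n l0(2), of v] v by (simp add: mult.assoc mult_left_mono)
  also have "\<dots> = (?C * ?D) * (real n_st * sum_sq_proj n v)" by (simp add: mult_ac)
  also have "\<dots> \<le> (4 * real n) * (real n_st * sum_sq_proj n v)"
    using card_near_new_point_sensitivity_le[OF n l0 \<eta> \<rho>] sum_sq_proj_nonneg[of n v]
    by (intro mult_right_mono) auto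
  finally show ?thesis using n n_st_pos by (simp add: mult_ac)
qed

lemma sum_sq_proj_le_far:
  assumes v: "norm v = 1" "\<And>z. z \<in> Z \<Longrightarrow> v \<bullet> f (th n) z = 0"
    and F: "\<And>y. y \<in> XX \<Longrightarrow> norm (f (th n) y) \<le> F"
    and r: "\<And>y z. y \<in> XX \<Longrightarrow> z \<in> Z \<Longrightarrow> dist y z < r \<Longrightarrow> norm (f (th n) y - f (th n) z) \<le> \<eta>"
  shows "sum_sq_proj n v \<le> real n * \<eta>\<^sup>2 + F\<^sup>2 * real (card {i\<in>{1..n}. \<forall>z\<in>Z. r \<le> dist (x i) z})"
proof -
  let ?near = "\<lambda>i. \<exists>z\<in>Z. dist (x i) z < r"
  have each: "(v \<bullet> f (th n) (x i))\<^sup>2 \<le> (if ?near i then \<eta>\<^sup>2 else F\<^sup>2)" if "i \<in> {1..n}" for i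
  proof (cases "?near i")
    case True
    then obtain z where z: "z \<in> Z" "dist (x i) z < r" by blast
    have "\<bar>v \<bullet> f (th n) (x i)\<bar> = \<bar>v \<bullet> (f (th n) (x i) - f (th n) z)\<bar>"
      using v(2)[OF z(1)] by (simp add: inner_diff_right)
    also have "\<dots> \<le> norm (f (th n) (x i) - f (th n) z)"
      using Cauchy_Schwarz_ineq2[of v] v(1) by simp
    also have "\<dots> \<le> \<eta>" using that x_in z by (intro r) auto
    finally show ?thesis using True by (simp add: abs_le_square_iff[symmetric])
  next
    case False
    have "\<bar>v \<bullet> f (th n) (x i)\<bar> \<le> F"
      using Cauchy_Schwarz_ineq2[of v "f (th n) (x i)"] v(1) F[of "x i"] that x_in by simp
    then show ?thesis using False by (simp add: abs_le_square_iff[symmetric])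
  qed
  have "sum_sq_proj n v \<le> (\<Sum>i=1..n. if ?near i then \<eta>\<^sup>2 else F\<^sup>2)"
    unfolding sum_sq_proj_def by (intro sum_mono each)
  also have "\<dots> = real (card ({1..n} \<inter> {i. ?near i})) * \<eta>\<^sup>2
      + real (card ({1..n} \<inter> - {i. ?near i})) * F\<^sup>2"
    by (simp add: sum.If_cases)
  also have "{1..n} \<inter> - {i. ?near i} = {i\<in>{1..n}. \<forall>z\<in>Z. r \<le> dist (x i) z}" by (auto simp: not_less)
  also have "real (card ({1..n} \<inter> {i. ?near i})) \<le> real n"
    using card_mono[of "{1..n}" "{1..n} \<inter> {i. ?near i}"] by simp
  finally show ?thesis by (simp add: mult_right_mono mult.commute)
qed

lemma card_visits_le_far:
  assumes n: "n_st \<le> n" and Z: "finite Z" "card Z < CARD('p)" "Z \<subseteq> XX"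
    and z: "z \<in> Z" "dist (x (Suc n)) z < r"
    and l0: "0 < l0" "\<And>v. l0 * (norm v)\<^sup>2 \<le> (\<Sum>k=1..n_st. (v \<bullet> f (th n) (x k))\<^sup>2)"
    and \<eta>: "0 \<le> \<eta>" "4 * \<eta>\<^sup>2 * real n_st \<le> l0"
    and cont: "\<And>y y'. y \<in> XX \<Longrightarrow> y' \<in> XX \<Longrightarrow> dist y y' < 2 * r \<Longrightarrow> norm (f (th n) y - f (th n) y') \<le> \<eta>"
    and F: "\<And>y. y \<in> XX \<Longrightarrow> norm (f (th n) y) \<le> F"
  shows "real (card {i\<in>{1..n}. dist (x i) z < r}) * l0
    \<le> 4 * real n_st * (real n * \<eta>\<^sup>2 + F\<^sup>2 * real (card {i\<in>{1..n}. \<forall>z\<in>Z. r \<le> dist (x i) z}))"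
proof -
  obtain v where v: "norm v = 1" "\<And>z. z \<in> Z \<Longrightarrow> v \<bullet> f (th n) z = 0"
    using exists_unit_orthogonal_image[OF Z(1), of "f (th n)"] Z(2) by auto
  have "r > 0" using z(2) zero_le_dist[of "x (Suc n)" z] by linarith
  have x_new: "x (Suc n) \<in> XX" by (rule x_in) simp
  have "dist (x i) (x (Suc n)) < 2 * r" if "dist (x i) z < r" for i
    using z(2) that dist_triangle2[of "x i" "x (Suc n)" z] by linarith
  then have "{i\<in>{1..n}. dist (x i) z < r} \<subseteq> {i\<in>{1..n}. dist (x i) (x (Suc n)) < 2 * r}"
    by blast
  then have "real (card {i\<in>{1..n}. dist (x i) z < r}) * l0
      \<le> real (card {i\<in>{1..n}. dist (x i) (x (Suc n)) < 2 * r}) * l0"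
    using l0(1) by (intro mult_right_mono) (auto intro: card_mono)
  also have "\<dots> \<le> 4 * real n_st * sum_sq_proj n v"
    using x_new cont by (intro card_near_new_point_le[OF n l0 \<eta> _ v(1)])
  also have "\<dots> \<le> 4 * real n_st * (real n * \<eta>\<^sup>2 + F\<^sup>2 * real (card {i\<in>{1..n}. \<forall>z\<in>Z. r \<le> dist (x i) z}))"
    using Z(3) \<open>r > 0\<close> by (intro mult_left_mono sum_sq_proj_le_far v F cont) auto
  finally show ?thesis .
qed

text \<open>Choosing the tolerance \<eta> of the continuity of f so that 4 n_st \<eta>^2 = l0 / (8 p) makes the
  coefficient of n equal to 1 / (8 p).\<close>
lemma card_visits_linear_bound:
  assumes Z: "finite Z" "card Z < CARD('p)" "Z \<subseteq> XX"
  obtains r b where "0 < r" "0 \<le> b"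
    "\<And>n z. n_st \<le> n \<Longrightarrow> z \<in> Z \<Longrightarrow> dist (x (Suc n)) z < r \<Longrightarrow>
      real (card {i\<in>{1..n}. dist (x i) z < r})
      \<le> 1 / (8 * real CARD('p)) * real n + b * real (card {i\<in>{1..n}. \<forall>z\<in>Z. r \<le> dist (x i) z})"
proof -
  obtain l0 where l0: "0 < l0" "\<And>\<theta> v. \<theta> \<in> TT \<Longrightarrow> l0 * (norm v)\<^sup>2 \<le> (\<Sum>k=1..n_st. (v \<bullet> f \<theta> (x k))\<^sup>2)"
    using init_design_coercive by blast
  obtain F where F: "\<And>y \<theta>. y \<in> XX \<Longrightarrow> \<theta> \<in> TT \<Longrightarrow> norm (f \<theta> y) \<le> F"
    using compact_Times_bounded[OF f_cont compact_XX compact_TT] by auto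
  define P where "P = real CARD('p)"
  define \<eta> where "\<eta> = sqrt (l0 / (32 * real n_st * P))"
  have "1 \<le> P" by (simp add: P_def)
  have "0 < \<eta>" "\<eta>\<^sup>2 = l0 / (32 * real n_st * P)"
    using l0(1) n_st_pos \<open>1 \<le> P\<close> by (simp_all add: \<eta>_def)
  then have \<eta>: "4 * real n_st * \<eta>\<^sup>2 = l0 / (8 * P)"
    using n_st_pos \<open>1 \<le> P\<close> by (simp add: field_simps)
  moreover have "l0 / (8 * P) \<le> l0" using l0(1) \<open>1 \<le> P\<close> by (simp add: field_simps)
  ultimately have \<eta>_le: "4 * \<eta>\<^sup>2 * real n_st \<le> l0" by (simp add: mult_ac)
  obtain \<rho> where "0 < \<rho>" and \<rho>: "\<And>y y' \<theta> \<theta>'. y \<in> XX \<Longrightarrow> y' \<in> XX \<Longrightarrow> \<theta> \<in> TT \<Longrightarrow> \<theta>' \<in> TT \<Longrightarrow>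
      dist y y' < \<rho> \<Longrightarrow> dist \<theta> \<theta>' < \<rho> \<Longrightarrow> dist (f \<theta> y) (f \<theta>' y') < \<eta>"
    by (rule compact_Times_uniform_continuity[OF f_cont compact_XX compact_TT \<open>0 < \<eta>\<close>]) blast
  show ?thesis
  proof (rule that[of "\<rho> / 2" "4 * real n_st * F\<^sup>2 / l0"])
    show "0 < \<rho> / 2" "0 \<le> 4 * real n_st * F\<^sup>2 / l0" using \<open>0 < \<rho>\<close> l0(1) by simp_all
    fix n z assume n: "n_st \<le> n" and z: "z \<in> Z" "dist (x (Suc n)) z < \<rho> / 2"
    let ?far = "real (card {i\<in>{1..n}. \<forall>z\<in>Z. \<rho> / 2 \<le> dist (x i) z})"
    have "real (card {i\<in>{1..n}. dist (x i) z < \<rho> / 2}) * l0 \<le> 4 * real n_st * (real n * \<eta>\<^sup>2 + F\<^sup>2 * ?far)"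
    proof (rule card_visits_le_far[OF n Z z l0(1) l0(2)[OF th_in[OF n]] _ \<eta>_le])
      show "norm (f (th n) y - f (th n) y') \<le> \<eta>" if "y \<in> XX" "y' \<in> XX" "dist y y' < 2 * (\<rho> / 2)" for y y'
        using \<rho>[OF that(1,2) th_in[OF n] th_in[OF n]] that(3) \<open>0 < \<rho>\<close> by (simp add: dist_norm)
      show "norm (f (th n) y) \<le> F" if "y \<in> XX" for y using F[OF that th_in[OF n]] .
    qed (use \<open>0 < \<eta>\<close> in simp)
    also have "\<dots> = (1 / (8 * P) * real n + 4 * real n_st * F\<^sup>2 / l0 * ?far) * l0"
      using \<eta> l0(1) by (simp add: field_simps)
    finally show "real (card {i\<in>{1..n}. dist (x i) z < \<rho> / 2}) \<le> 1 / (8 * real CARD('p)) * real n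
        + 4 * real n_st * F\<^sup>2 / l0 * ?far"
      using l0(1) by (simp add: P_def)
  qed
qed

lemma eventually_far_fraction:
  assumes Z: "finite Z" "card Z < CARD('p)" "Z \<subseteq> XX"
  obtains r \<beta> where "0 < r" "0 < \<beta>"
    "eventually (\<lambda>N. \<beta> * real N < real (card {i\<in>{1..N}. \<forall>z\<in>Z. r \<le> dist (x i) z})) sequentially"
proof -
  obtain r b where "0 < r" "0 \<le> b" and visits: "\<And>n z. n_st \<le> n \<Longrightarrow> z \<in> Z \<Longrightarrow> dist (x (Suc n)) z < r \<Longrightarrow>
      real (card {i\<in>{1..n}. dist (x i) z < r})
      \<le> 1 / (8 * real CARD('p)) * real n + b * real (card {i\<in>{1..n}. \<forall>z\<in>Z. r \<le> dist (x i) z})"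
    by (rule card_visits_linear_bound[OF Z]) (rule that)
  define P where "P = real CARD('p)"
  define far where "far N = card {i\<in>{1..N}. \<forall>z\<in>Z. r \<le> dist (x i) z}" for N
  define \<beta> where "\<beta> = 1 / (4 * (P * b + 1))"
  have P: "1 \<le> P" "real (card Z) \<le> P" using Z(2) by (simp_all add: P_def)
  then have "0 \<le> P * b" using \<open>0 \<le> b\<close> by simp
  have small: "real N \<le> 2 * P * (real n_st + 1)" if "real (far N) \<le> \<beta> * real N" for N
  proof -
    have "real N \<le> real (card Z) * (real n_st + 1 + 1 / (8 * P) * real N + b * real (far N)) + real (far N)"
      unfolding far_def
    proof (rule card_far_lower_bound[OF Z(1) _ \<open>0 \<le> b\<close>])
      show "0 \<le> 1 / (8 * P)" using P(1) by simp
    qed (use visits in \<open>simp add: far_def P_def\<close>)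
    also have "\<dots> \<le> P * (real n_st + 1 + 1 / (8 * P) * real N + b * real (far N)) + real (far N)"
      using P(2) \<open>0 \<le> b\<close> by (intro add_right_mono mult_right_mono) auto
    also have "\<dots> = P * (real n_st + 1) + real N / 8 + (P * b + 1) * real (far N)"
      using P(1) by (simp add: field_simps)
    also have "(P * b + 1) * real (far N) \<le> (P * b + 1) * (\<beta> * real N)"
      using that \<open>0 \<le> P * b\<close> by (intro mult_left_mono) auto
    also have "(P * b + 1) * (\<beta> * real N) = real N / 4"
    proof -
      have "4 * (P * b) + 4 \<noteq> 0" using \<open>0 \<le> P * b\<close> by linarith
      then show ?thesis by (simp add: \<beta>_def field_simps)
    qed
    finally show ?thesis using P(1) by simp
  qed
  have "eventually (\<lambda>N. 2 * P * (real n_st + 1) < real N) sequentially"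
    using filterlim_real_sequentially unfolding filterlim_at_top_dense by blast
  then have "eventually (\<lambda>N. \<beta> * real N < real (far N)) sequentially"
    by eventually_elim (use small in \<open>meson not_le order.strict_trans2\<close>)
  moreover have "0 < \<beta>" using \<open>0 \<le> P * b\<close> by (simp add: \<beta>_def)
  ultimately show ?thesis using \<open>0 < r\<close> that unfolding far_def by blast
qed

theorem eventually_average_square_ge:
  assumes g: "continuous_on XX g"
    and zeros: "finite {y\<in>XX. g y = 0}" "card {y\<in>XX. g y = 0} < CARD('p)"
  shows "\<exists>c>0. eventually (\<lambda>n. c \<le> (\<Sum>i=1..n. (g (x i))\<^sup>2) / real n) sequentially"
proof -
  define Z where "Z = {y\<in>XX. g y = 0}"
  obtain r \<beta> where "0 < r" "0 < \<beta>"
    and far: "eventually (\<lambda>N. \<beta> * real N < real (card {i\<in>{1..N}. \<forall>z\<in>Z. r \<le> dist (x i) z})) sequentially"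
    using eventually_far_fraction[of Z] zeros by (auto simp: Z_def)
  define K where "K = {y\<in>XX. \<forall>z\<in>Z. r \<le> dist y z}"
  have "K = XX \<inter> (\<Inter>z\<in>Z. {y. r \<le> dist y z})" unfolding K_def by auto
  then have "compact K"
    by (auto intro!: compact_Int_closed compact_XX closed_INT closed_Collect_le continuous_intros)
  moreover have "continuous_on K g" using g by (rule continuous_on_subset) (auto simp: K_def)
  moreover have "g y \<noteq> 0" if "y \<in> K" for y
    using that \<open>0 < r\<close> by (fastforce simp: K_def Z_def)
  ultimately obtain \<gamma> where "0 < \<gamma>" and \<gamma>: "\<And>y. y \<in> K \<Longrightarrow> \<gamma> \<le> (g y)\<^sup>2"
    using compact_square_lower_bound by blast
  have "eventually (\<lambda>n. \<gamma> * \<beta> \<le> (\<Sum>i=1..n. (g (x i))\<^sup>2) / real n) sequentially"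
    using far
  proof eventually_elim
    case (elim n)
    let ?S = "{i\<in>{1..n}. \<forall>z\<in>Z. r \<le> dist (x i) z}"
    have "0 < real n" using elim \<open>0 < \<beta>\<close> by (cases n) auto
    have "\<gamma> * (\<beta> * real n) \<le> \<gamma> * real (card ?S)"
      using elim \<open>0 < \<gamma>\<close> by simp
    also have "\<dots> = (\<Sum>i\<in>?S. \<gamma>)" by simp
    also have "\<dots> \<le> (\<Sum>i\<in>?S. (g (x i))\<^sup>2)" using x_in by (intro sum_mono \<gamma>) (auto simp: K_def)
    also have "\<dots> \<le> (\<Sum>i=1..n. (g (x i))\<^sup>2)" by (intro sum_mono2) auto
    finally show ?case using \<open>0 < real n\<close> by (simp add: field_simps)
  qed
  then show ?thesis using \<open>0 < \<gamma>\<close> \<open>0 < \<beta>\<close> by (intro exI[of _ "\<gamma> * \<beta>"]) simp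
qed

theorem separation:
  fixes \<mu> :: "'x \<Rightarrow> 't \<Rightarrow> real"
  assumes mu_cont: "continuous_on (XX \<times> TT) (\<lambda>(y, \<theta>). \<mu> y \<theta>)"
    and sat_ident: "\<And>z \<theta> \<theta>'. inj z \<Longrightarrow> range z \<subseteq> XX \<Longrightarrow> \<theta> \<in> TT \<Longrightarrow> \<theta>' \<in> TT \<Longrightarrow>
      (\<forall>j::'p. \<mu> (z j) \<theta> = \<mu> (z j) \<theta>') \<Longrightarrow> \<theta> = \<theta>'"
    and "\<theta>bar \<in> TT" "0 < \<epsilon>"
  shows "\<exists>c>0. eventually (\<lambda>n. \<forall>\<theta>\<in>TT. \<epsilon> \<le> dist \<theta> \<theta>bar \<longrightarrow>
    c \<le> (\<Sum>i=1..n. (\<mu> (x i) \<theta> - \<mu> (x i) \<theta>bar)\<^sup>2) / real n) sequentially"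
proof (rule uniform_separation[OF compact_XX compact_TT mu_cont x_in _ \<open>0 < \<epsilon>\<close>])
  fix t assume "t \<in> TT" "t \<noteq> \<theta>bar"
  show "\<exists>c>0. eventually (\<lambda>n. c \<le> (\<Sum>i=1..n. (\<mu> (x i) t - \<mu> (x i) \<theta>bar)\<^sup>2) / real n) sequentially"
    using saturated_identifiable_zero_set[OF sat_ident \<open>t \<in> TT\<close> \<open>\<theta>bar \<in> TT\<close> \<open>t \<noteq> \<theta>bar\<close>]
      \<open>t \<in> TT\<close> \<open>\<theta>bar \<in> TT\<close>
    by (intro eventually_average_square_ge continuous_intros continuous_on_Times_fst[OF mu_cont]) auto
qed

theorem least_squares_consistent_along_path:
  fixes \<mu> :: "'x \<Rightarrow> 't \<Rightarrow> real" and y e :: "nat \<Rightarrow> real" and \<theta>LS :: "nat \<Rightarrow> 't"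
  assumes mu_cont: "continuous_on (XX \<times> TT) (\<lambda>(y, \<theta>). \<mu> y \<theta>)"
    and sat_ident: "\<And>z \<theta> \<theta>'. inj z \<Longrightarrow> range z \<subseteq> XX \<Longrightarrow> \<theta> \<in> TT \<Longrightarrow> \<theta>' \<in> TT \<Longrightarrow>
      (\<forall>j::'p. \<mu> (z j) \<theta> = \<mu> (z j) \<theta>') \<Longrightarrow> \<theta> = \<theta>'"
    and "\<theta>bar \<in> TT"
    and net: "\<And>r. 0 < r \<Longrightarrow> \<exists>T. finite T \<and> T \<subseteq> TA \<and> (\<forall>\<theta>\<in>TT. \<exists>t\<in>T. \<forall>y\<in>XX. \<bar>\<mu> y \<theta> - \<mu> y t\<bar> < r)"
    and conv: "\<forall>t\<in>TA. (\<lambda>n. (\<Sum>i=1..n. (\<mu> (x i) t - \<mu> (x i) \<theta>bar) * e i) / real n) \<longlonglongrightarrow> 0"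
    and abs_bound: "\<exists>A. eventually (\<lambda>n. (\<Sum>i=1..n. \<bar>e i\<bar>) / real n \<le> A) sequentially"
    and model: "\<And>i. 1 \<le> i \<Longrightarrow> y i = \<mu> (x i) \<theta>bar + e i"
    and LS_in: "\<And>n. n_st \<le> n \<Longrightarrow> \<theta>LS n \<in> TT"
    and LS_min: "\<And>n \<theta>. n_st \<le> n \<Longrightarrow> \<theta> \<in> TT \<Longrightarrow>
      (\<Sum>i=1..n. (y i - \<mu> (x i) (\<theta>LS n))\<^sup>2) \<le> (\<Sum>i=1..n. (y i - \<mu> (x i) \<theta>)\<^sup>2)"
  shows "\<theta>LS \<longlonglongrightarrow> \<theta>bar"
proof (rule least_squares_consistent)
  show "\<exists>c>0. eventually (\<lambda>n. \<forall>\<theta>\<in>TT. \<epsilon> \<le> dist \<theta> \<theta>bar \<longrightarrow>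
      c \<le> (\<Sum>i=1..n. (\<mu> (x i) \<theta> - \<mu> (x i) \<theta>bar)\<^sup>2) / real n) sequentially" if "0 < \<epsilon>" for \<epsilon>
    by (rule separation[OF mu_cont sat_ident \<open>\<theta>bar \<in> TT\<close> that])
  show "eventually (\<lambda>n. \<forall>\<theta>\<in>TT. (\<Sum>i=1..n. (\<mu> (x i) \<theta> - \<mu> (x i) \<theta>bar) * e i) / real n < \<delta>) sequentially"
    if "0 < \<delta>" for \<delta>
    using abs_bound uniform_noise_average[OF net conv[rule_format] _ x_in that] by blast
  show "eventually (\<lambda>n. \<theta>LS n \<in> TT \<and> (\<Sum>i=1..n. (\<mu> (x i) (\<theta>LS n) - \<mu> (x i) \<theta>bar)\<^sup>2)
      \<le> 2 * (\<Sum>i=1..n. (\<mu> (x i) (\<theta>LS n) - \<mu> (x i) \<theta>bar) * e i)) sequentially"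
    using eventually_ge_at_top[of n_st]
  proof eventually_elim
    case (elim n)
    have "(\<Sum>i=1..n. (\<mu> (x i) (\<theta>LS n) - \<mu> (x i) \<theta>bar)\<^sup>2)
        \<le> 2 * (\<Sum>i=1..n. (\<mu> (x i) (\<theta>LS n) - \<mu> (x i) \<theta>bar) * e i)"
      by (rule least_squares_basic_inequality[OF LS_min[OF elim \<open>\<theta>bar \<in> TT\<close>]]) (simp add: model)
    with LS_in[OF elim] show ?case by simp
  qed
qed

end

theorem theorem3p1:
  fixes \<X> :: "'x::metric_space set" and \<Theta> :: "'t::metric_space set"
    and \<mu> :: "'x \<Rightarrow> 't \<Rightarrow> real"
    and f :: "'t \<Rightarrow> 'x \<Rightarrow> real ^ 'p::finite"
    and M :: "'w measure" and F :: "nat \<Rightarrow> 'w measure"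
    and X :: "nat \<Rightarrow> 'w \<Rightarrow> 'x" and Y e :: "nat \<Rightarrow> 'w \<Rightarrow> real"
    and \<theta>bar :: 't and n_st :: nat and xs :: "nat \<Rightarrow> 'x"
    and \<theta>hat \<theta>LS :: "nat \<Rightarrow> 'w \<Rightarrow> 't"
  assumes X_compact: "compact \<X>" and Theta_compact: "compact \<Theta>"
    and mu_cont: "continuous_on (\<X> \<times> \<Theta>) (\<lambda>(x, \<theta>). \<mu> x \<theta>)"
    and f_span: "\<And>\<theta>. \<theta> \<in> \<Theta> \<Longrightarrow> span (f \<theta> ` \<X>) = UNIV"
    and f_cont: "continuous_on (\<X> \<times> \<Theta>) (\<lambda>(x, \<theta>). f \<theta> x)"
    and sat_ident: "\<And>z \<theta> \<theta>'. inj z \<Longrightarrow> range z \<subseteq> \<X> \<Longrightarrow> \<theta> \<in> \<Theta> \<Longrightarrow> \<theta>' \<in> \<Theta> \<Longrightarrow>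
        (\<forall>j::'p. \<mu> (z j) \<theta> = \<mu> (z j) \<theta>') \<Longrightarrow> \<theta> = \<theta>'"
    and prob: "prob_space M"
    and theta_bar: "\<theta>bar \<in> \<Theta>"
    \<comment> \<open>initial design\<close>
    and init_pts: "\<And>i. 1 \<le> i \<Longrightarrow> i \<le> n_st \<Longrightarrow> xs i \<in> \<X>"
    and init_X: "\<And>i \<omega>. 1 \<le> i \<Longrightarrow> i \<le> n_st \<Longrightarrow> X i \<omega> = xs i"
    and init_pd: "\<And>\<theta>. \<theta> \<in> \<Theta> \<Longrightarrow> pos_def_mat (info_matrix f (emp_design xs n_st) \<theta>)"
    \<comment> \<open>adaptive estimators: Theta-valued measurable functions of the data up to stage n\<close>
    and hat_in: "\<And>n \<omega>. n \<ge> n_st \<Longrightarrow> \<theta>hat n \<omega> \<in> \<Theta>"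
    and hat_meas: "\<And>n. n \<ge> n_st \<Longrightarrow> \<theta>hat n \<in> measurable M borel"
    and hat_data: "\<And>n \<omega> \<omega>'. n \<ge> n_st \<Longrightarrow>
        (\<forall>i\<in>{1..n}. X i \<omega> = X i \<omega>' \<and> Y i \<omega> = Y i \<omega>') \<Longrightarrow> \<theta>hat n \<omega> = \<theta>hat n \<omega>'"
    \<comment> \<open>adaptive Wynn algorithm step\<close>
    and wynn: "\<And>n \<omega>. n \<ge> n_st \<Longrightarrow>
        X (Suc n) \<omega> \<in> \<X> \<and>
        (\<forall>x\<in>\<X>. f (\<theta>hat n \<omega>) x \<bullet> (matrix_inv (info_matrix f (emp_design (\<lambda>i. X i \<omega>) n) (\<theta>hat n \<omega>)) *v f (\<theta>hat n \<omega>) x)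
           \<le> f (\<theta>hat n \<omega>) (X (Suc n) \<omega>) \<bullet> (matrix_inv (info_matrix f (emp_design (\<lambda>i. X i \<omega>) n) (\<theta>hat n \<omega>)) *v f (\<theta>hat n \<omega>) (X (Suc n) \<omega>)))"
    \<comment> \<open>(A1) filtration\<close>
    and F_sub: "\<And>n. subalgebra M (F n)"
    and F_mono: "\<And>n. sets (F n) \<subseteq> sets (F (Suc n))"
    and X_meas: "\<And>i. 1 \<le> i \<Longrightarrow> X i \<in> measurable (F (i - 1)) borel"
    and Y_meas: "\<And>i. 1 \<le> i \<Longrightarrow> Y i \<in> borel_measurable (F i)"
    \<comment> \<open>(A2) martingale difference errors\<close>
    and Y_model: "\<And>i \<omega>. 1 \<le> i \<Longrightarrow> Y i \<omega> = \<mu> (X i \<omega>) \<theta>bar + e i \<omega>"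
    and e_meas: "\<And>i. 1 \<le> i \<Longrightarrow> e i \<in> borel_measurable M"
    and e_sq_int: "\<And>i. 1 \<le> i \<Longrightarrow> integrable M (\<lambda>\<omega>. (e i \<omega>)\<^sup>2)"
    and e_cond_mean: "\<And>i. 1 \<le> i \<Longrightarrow> AE \<omega> in M. real_cond_exp M (F (i - 1)) (e i) \<omega> = 0"
    and e_cond_var: "AE \<omega> in M. bdd_above ((\<lambda>i. real_cond_exp M (F (i - 1)) (\<lambda>\<omega>. (e i \<omega>)\<^sup>2) \<omega>) ` {1..})"
    \<comment> \<open>least squares estimators: Theta-valued measurable functions of the data\<close>
    and LS_in: "\<And>n \<omega>. n \<ge> n_st \<Longrightarrow> \<theta>LS n \<omega> \<in> \<Theta>"
    and LS_meas: "\<And>n. n \<ge> n_st \<Longrightarrow> \<theta>LS n \<in> measurable M borel"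
    and LS_data: "\<And>n \<omega> \<omega>'. n \<ge> n_st \<Longrightarrow>
        (\<forall>i\<in>{1..n}. X i \<omega> = X i \<omega>' \<and> Y i \<omega> = Y i \<omega>') \<Longrightarrow> \<theta>LS n \<omega> = \<theta>LS n \<omega>'"
    and LS_min: "\<And>n \<omega> \<theta>. n \<ge> n_st \<Longrightarrow> \<theta> \<in> \<Theta> \<Longrightarrow>
        (\<Sum>i=1..n. (Y i \<omega> - \<mu> (X i \<omega>) (\<theta>LS n \<omega>))\<^sup>2) \<le> (\<Sum>i=1..n. (Y i \<omega> - \<mu> (X i \<omega>) \<theta>)\<^sup>2)"
  shows "AE \<omega> in M. (\<lambda>n. \<theta>LS n \<omega>) \<longlonglongrightarrow> \<theta>bar"
proof -
  interpret discrete_filtration M F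
    using prob F_sub F_mono by (simp add: discrete_filtration_def discrete_filtration_axioms_def)
  have X_in: "X i \<omega> \<in> \<X>" if "1 \<le> i" for i \<omega>
    using that init_pts init_X wynn[of "i - 1" \<omega>] by (cases "i \<le> n_st") auto
  have design: "wynn_design \<X> \<Theta> f n_st (\<lambda>i. X i \<omega>) (\<lambda>n. \<theta>hat n \<omega>)" for \<omega>
  proof
    show "pos_def_mat (info_matrix f (emp_design (\<lambda>i. X i \<omega>) n_st) \<theta>)" if "\<theta> \<in> \<Theta>" for \<theta>
      using init_pd[OF that] emp_design_cong[of n_st "\<lambda>i. X i \<omega>" xs] init_X by simp
  qed (use X_compact Theta_compact f_cont X_in hat_in wynn in blast)+
  have e: "L2_martingale_difference e"
    by (rule regression_errors_L2_martingale_difference[OF mu_cont theta_bar X_meas X_in Y_meas Y_model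
          e_sq_int e_cond_mean])
  have e_bdd: "AE \<omega> in M. bdd_above ((\<lambda>i. cond_var e i \<omega>) ` {1..})"
    using e_cond_var by (simp add: cond_var_def)
  obtain TA where TA: "countable TA" "TA \<subseteq> \<Theta>"
    "\<forall>r>0. \<exists>T. finite T \<and> T \<subseteq> TA \<and> (\<forall>\<theta>\<in>\<Theta>. \<exists>t\<in>T. \<forall>y\<in>\<X>. \<bar>\<mu> y \<theta> - \<mu> y t\<bar> < r)"
    using countable_uniform_net[OF X_compact Theta_compact mu_cont] by blast
  have "AE \<omega> in M. \<forall>t\<in>TA. (\<lambda>n. (\<Sum>i=1..n. (\<mu> (X i \<omega>) t - \<mu> (X i \<omega>) \<theta>bar) * e i \<omega>) / real n) \<longlonglongrightarrow> 0"
    by (rule AE_weighted_averages_tendsto_zero[OF e e_bdd X_compact Theta_compact mu_cont X_meas X_in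
          TA(1,2) theta_bar])
  moreover have "AE \<omega> in M. \<exists>A. eventually (\<lambda>n. (\<Sum>i=1..n. \<bar>e i \<omega>\<bar>) / real n \<le> A) sequentially"
    using e_bdd L2_martingale_differenceD(1)[OF e] e_sq_int by (intro average_abs_eventually_bounded)
  ultimately show ?thesis
  proof eventually_elim
    case (elim \<omega>)
    show ?case
      by (rule wynn_design.least_squares_consistent_along_path[OF design mu_cont sat_ident theta_bar
          TA(3)[rule_format] elim Y_model LS_in LS_min])
  qed
qed

end
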